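(* For each $j=0,\dots,4$, $P\Gamma^{\mathbb{R}}_j\cong PO(\Psi_j)$, where $O(\Psi_j)$ is the group of automorphisms of $\mathbb{Z}^5$ preserving the quadratic form $\Psi_j$ and $PO(\Psi_j)=O(\Psi_j)/\{\pm1\}$, with $\Psi_j(y_0,\dots,y_4)=-y_0^2+\sum_{i=1}^{4-j}y_i^2+3\sum_{i=5-j}^{4}y_i^2$ (so $j$ of the coefficients of $y_1^2,\dots,y_4^2$, namely the last $j$, equal $3$ and the others equal $1$).
   Context: Let $\omega=e^{2\pi i/3}$, $\mathcal{E}=\mathbb{Z}[\omega]$, $\theta=\sqrt{-3}$. Let $\Lambda=\mathcal{E}^5$ with Hermitian form $h(x,y)=-x_0\bar y_0+x_1\bar y_1+\dots+x_4\bar y_4$, let $\Gamma$ be its group of $\mathcal{E}$-linear isometries, and $P\Gamma=\Gamma/\{\text{unit scalars}\}$. Complex hyperbolic space $\mathbb{C}H^4$ is the set of $h$-negative lines in $\mathbb{C}^5=\Lambda\otimes_{\mathcal{E}}\mathbb{C}$, on which $P\Gamma$ acts. For $j=0,\dots,4$ let $\xi_j$ be the antilinear map $(x_0,\dots,x_4)\mapsto(\bar x_0,\dots,\bar x_{4-j},-\bar x_{5-j},\dots,-\bar x_4)$ (conjugate all coordinates, negate the last $j$), let $H^4_j$ be its fixed-point set in $\mathbb{C}H^4$ (a copy of real hyperbolic $4$-space), and let $P\Gamma^{\mathbb{R}}_j$ be the stabilizer of $H^4_j$ in $P\Gamma$. *)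

theory Defs
  imports Complex_Main "Jordan_Normal_Form.Matrix" "HOL-Algebra.Coset"
begin

definition omega :: complex where
  "omega = cis (2 * pi / 3)"

definition Eis :: "complex set" where
  "Eis = {of_int a + of_int b * omega | a b. True}"

definition Eis_units :: "complex set" where
  "Eis_units = {u \<in> Eis. \<exists>v \<in> Eis. u * v = 1}"

definition herm :: "complex vec \<Rightarrow> complex vec \<Rightarrow> complex" where
  "herm x y = (\<Sum>i<5. (if i = 0 then -1 else 1) * x $ i * cnj (y $ i))"

definition Lambda :: "complex vec set" where
  "Lambda = {x \<in> carrier_vec 5. \<forall>i<5. x $ i \<in> Eis}"

text \<open>\<open>\<E>\<close>-linear maps \<open>\<Lambda> \<rightarrow> \<Lambda>\<close> are given by 5x5 matrices with entries in \<open>\<E>\<close>.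
  \<open>\<Gamma>\<close> is the group of those which are bijective on \<open>\<Lambda>\<close> (inverse also over \<open>\<E>\<close>)
  and preserve \<open>h\<close>.\<close>
definition Eis_mat :: "complex mat set" where
  "Eis_mat = {M \<in> carrier_mat 5 5. \<forall>i<5. \<forall>k<5. M $$ (i, k) \<in> Eis}"

definition Gamma_carrier :: "complex mat set" where
  "Gamma_carrier = {M \<in> Eis_mat.
      (\<exists>N \<in> Eis_mat. N * M = 1\<^sub>m 5 \<and> M * N = 1\<^sub>m 5) \<and>
      (\<forall>x \<in> Lambda. \<forall>y \<in> Lambda. herm (M *\<^sub>v x) (M *\<^sub>v y) = herm x y)}"

definition Gamma :: "complex mat monoid" where
  "Gamma = \<lparr>carrier = Gamma_carrier, mult = (*), one = 1\<^sub>m 5\<rparr>"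

definition unit_scalars :: "complex mat set" where
  "unit_scalars = {u \<cdot>\<^sub>m 1\<^sub>m 5 | u. u \<in> Eis_units}"

definition PGamma :: "complex mat set monoid" where
  "PGamma = Gamma Mod unit_scalars"

definition cline :: "complex vec \<Rightarrow> complex vec set" where
  "cline v = {c \<cdot>\<^sub>v v | c. True}"

definition CH4 :: "complex vec set set" where
  "CH4 = {cline v | v. v \<in> carrier_vec 5 \<and> Re (herm v v) < 0}"

definition xi :: "nat \<Rightarrow> complex vec \<Rightarrow> complex vec" where
  "xi j x = vec 5 (\<lambda>i. if i < 5 - j then cnj (x $ i) else - cnj (x $ i))"

definition H4 :: "nat \<Rightarrow> complex vec set set" where
  "H4 j = {L \<in> CH4. xi j ` L = L}"

definition act_line :: "complex mat \<Rightarrow> complex vec set \<Rightarrow> complex vec set" where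
  "act_line M L = (\<lambda>x. M *\<^sub>v x) ` L"

text \<open>Stabilizer of \<open>H^4_j\<close> in \<open>P\<Gamma>\<close> (an element is a coset of unit scalars; all its
  representatives act identically on lines).\<close>
definition PGammaR :: "nat \<Rightarrow> complex mat set monoid" where
  "PGammaR j = PGamma\<lparr>carrier := {C \<in> carrier PGamma.
      \<forall>M \<in> C. act_line M ` H4 j = H4 j}\<rparr>"

definition psi_coeff :: "nat \<Rightarrow> nat \<Rightarrow> int" where
  "psi_coeff j i = (if i = 0 then -1 else if i < 5 - j then 1 else 3)"

definition Psi :: "nat \<Rightarrow> int vec \<Rightarrow> int" where
  "Psi j y = (\<Sum>i<5. psi_coeff j i * (y $ i)^2)"

definition O_Psi :: "nat \<Rightarrow> int mat monoid" where
  "O_Psi j = \<lparr>carrier = {M \<in> carrier_mat 5 5.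
      (\<exists>N \<in> carrier_mat 5 5. N * M = 1\<^sub>m 5 \<and> M * N = 1\<^sub>m 5) \<and>
      (\<forall>y \<in> carrier_vec 5. Psi j (M *\<^sub>v y) = Psi j y)},
    mult = (*), one = 1\<^sub>m 5\<rparr>"

definition PO_Psi :: "nat \<Rightarrow> int mat set monoid" where
  "PO_Psi j = O_Psi j Mod {1\<^sub>m 5, (-1) \<cdot>\<^sub>m 1\<^sub>m 5}"

end

theory Submission
  imports Defs "Jordan_Normal_Form.Determinant" "HOL-Computational_Algebra.Primes"
begin

text \<open>Conjugation by \<open>D = diag(1,\<dots>,1,\<theta>,\<dots>,\<theta>)\<close> (the last \<open>j\<close> entries \<open>\<theta> = \<surd>-3\<close>) turns
  \<open>h(Dy, Dy)\<close> into \<open>\<Psi>\<^sub>j(y)\<close>. So \<open>M \<mapsto> D M D\<^sup>-\<^sup>1\<close> maps \<open>O(\<Psi>\<^sub>j)\<close> into \<open>\<Gamma>\<close> (integrality over \<open>\<E>\<close>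
  because the entries of \<open>M\<close> joining a coefficient \<open>\<plusminus>1\<close> of \<open>\<Psi>\<^sub>j\<close> to a coefficient \<open>3\<close> are
  divisible by \<open>3\<close>); its image commutes with \<open>\<xi>\<^sub>j\<close>, hence stabilizes \<open>H\<^sup>4\<^sub>j\<close>, and the kernel
  of the induced map to \<open>P\<Gamma>\<close> is \<open>{\<plusminus>1}\<close>.

  Conversely, if \<open>g \<in> \<Gamma>\<close> stabilizes \<open>H\<^sup>4\<^sub>j\<close>, every \<open>\<xi>\<^sub>j\<close>-real negative vector is an eigenvector
  of the pair \<open>(\<xi>\<^sub>j g \<xi>\<^sub>j, g)\<close>; enough such vectors exist to force \<open>\<xi>\<^sub>j g \<xi>\<^sub>j = \<mu> g\<close> with
  \<open>\<mu>\<close> a unit. Every unit is a square up to sign, so after rescaling \<open>g\<close> by a unit,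
  \<open>\<xi>\<^sub>j g \<xi>\<^sub>j = \<plusminus>g\<close>. For the sign \<open>+\<close>, \<open>D\<^sup>-\<^sup>1 g D\<close> is integral and lies in \<open>O(\<Psi>\<^sub>j)\<close>. For
  the sign \<open>-\<close>, one gets an integral \<open>P\<close> carrying \<open>\<Psi>\<^sub>j\<close> to a diagonal form of discriminant
  \<open>-3\<^sup>5\<^sup>-\<^sup>j\<close>, whence \<open>det(P)\<^sup>2 3\<^sup>5\<^sup>-\<^sup>j = 3\<^sup>j\<close>, impossible since \<open>5\<close> is odd.\<close>

section \<open>Eisenstein integers\<close>

lemma omega_eq_Complex: "omega = Complex (-1/2) (sqrt 3 / 2)"
  unfolding omega_def cis.ctr using cos_120 sin_120 by simp

lemma omega_times_omega: "omega * omega = -1 - omega"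
  by (simp add: omega_eq_Complex complex_eq_iff field_simps)

lemma cnj_omega: "cnj omega = -1 - omega"
  by (simp add: omega_eq_Complex complex_eq_iff)

definition theta :: complex where
  "theta = Complex 0 (sqrt 3)"

lemma theta_times_theta: "theta * theta = -3"
  by (simp add: theta_def complex_eq_iff)

lemma cnj_theta: "cnj theta = - theta"
  by (simp add: theta_def complex_eq_iff)

lemma theta_nonzero: "theta \<noteq> 0"
  by (simp add: theta_def complex_eq_iff)

lemma theta_eq_omega: "theta = 1 + 2 * omega"
  by (simp add: theta_def omega_eq_Complex complex_eq_iff)

lemma Eis_iff: "z \<in> Eis \<longleftrightarrow> (\<exists>a b. z = of_int a + of_int b * omega)"
  unfolding Eis_def by auto

lemma Eis_add: "z \<in> Eis \<Longrightarrow> w \<in> Eis \<Longrightarrow> z + w \<in> Eis"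
proof -
  assume "z \<in> Eis" "w \<in> Eis"
  then obtain a b c d where "z = of_int a + of_int b * omega" "w = of_int c + of_int d * omega"
    unfolding Eis_iff by blast
  then have "z + w = of_int (a + c) + of_int (b + d) * omega"
    by (simp add: algebra_simps)
  then show ?thesis
    unfolding Eis_iff by blast
qed

lemma Eis_mult: "z \<in> Eis \<Longrightarrow> w \<in> Eis \<Longrightarrow> z * w \<in> Eis"
proof -
  assume "z \<in> Eis" "w \<in> Eis"
  then obtain a b c d where zw: "z = of_int a + of_int b * omega" "w = of_int c + of_int d * omega"
    unfolding Eis_iff by blast
  have "z * w = of_int a * of_int c + (of_int a * of_int d + of_int b * of_int c) * omega
       + of_int b * of_int d * (omega * omega)"
    by (simp add: zw algebra_simps)
  also have "\<dots> = of_int (a * c - b * d) + of_int (a * d + b * c - b * d) * omega"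
    by (simp add: omega_times_omega algebra_simps)
  finally show ?thesis
    unfolding Eis_iff by blast
qed

lemma Eis_uminus: "z \<in> Eis \<Longrightarrow> - z \<in> Eis"
proof -
  assume "z \<in> Eis"
  then obtain a b where "z = of_int a + of_int b * omega"
    unfolding Eis_iff by blast
  then have "- z = of_int (- a) + of_int (- b) * omega"
    by simp
  then show ?thesis
    unfolding Eis_iff by blast
qed

lemma Eis_cnj: "z \<in> Eis \<Longrightarrow> cnj z \<in> Eis"
proof -
  assume "z \<in> Eis"
  then obtain a b where "z = of_int a + of_int b * omega"
    unfolding Eis_iff by blast
  then have "cnj z = of_int (a - b) + of_int (- b) * omega"
    by (simp add: cnj_omega algebra_simps)
  then show ?thesis
    unfolding Eis_iff by blast
qed

lemma Eis_of_int [simp]: "of_int n \<in> Eis"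
  unfolding Eis_iff by (rule exI[of _ n], rule exI[of _ 0]) simp

lemma Eis_0 [simp]: "0 \<in> Eis" and Eis_1 [simp]: "1 \<in> Eis"
  using Eis_of_int[of 0] Eis_of_int[of 1] by simp_all

lemma Eis_omega: "omega \<in> Eis"
  unfolding Eis_iff by (rule exI[of _ 0], rule exI[of _ 1]) simp

lemma Eis_theta: "theta \<in> Eis"
  unfolding Eis_iff theta_eq_omega by (rule exI[of _ 1], rule exI[of _ 2]) simp

lemma Eis_sum: "(\<And>i. i \<in> A \<Longrightarrow> f i \<in> Eis) \<Longrightarrow> sum f A \<in> Eis"
  by (induction A rule: infinite_finite_induct) (auto intro: Eis_add)

lemma Eis_real_imp_int: "z \<in> Eis \<Longrightarrow> cnj z = z \<Longrightarrow> \<exists>n. z = of_int n"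
proof -
  assume "z \<in> Eis" "cnj z = z"
  then obtain a b where z: "z = of_int a + of_int b * omega" and "Im z = 0"
    unfolding Eis_iff complex_eq_iff by auto
  then have "b = 0"
    by (simp add: omega_eq_Complex)
  then show ?thesis
    using z by simp
qed

lemma Eis_imaginary_imp_int_theta: "z \<in> Eis \<Longrightarrow> cnj z = - z \<Longrightarrow> \<exists>n. z = of_int n * theta"
proof -
  assume "z \<in> Eis" "cnj z = - z"
  then obtain a b where z: "z = of_int a + of_int b * omega" and "Re z = 0"
    unfolding Eis_iff complex_eq_iff by auto
  then have "b = 2 * a"
    by (simp add: omega_eq_Complex)
  then show ?thesis
    using z by (intro exI[of _ a]) (simp add: theta_eq_omega algebra_simps)
qed

lemma Eis_norm_eq:
  "(of_int a + of_int b * omega) * cnj (of_int a + of_int b * omega) = of_int (a*a - a*b + b*b)"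
  by (simp add: omega_eq_Complex complex_eq_iff algebra_simps power2_eq_square)

lemma Eis_norm_form_nonneg: "0 \<le> (a::int) * a - a * b + b * b"
proof -
  have "4 * (a * a - a * b + b * b) = (2 * a - b)^2 + 3 * b^2"
    by (simp add: algebra_simps power2_eq_square)
  then have "0 \<le> 4 * (a * a - a * b + b * b)"
    by simp
  then show ?thesis
    by simp
qed

lemma Eis_units_iff: "u \<in> Eis_units \<longleftrightarrow> u \<in> Eis \<and> u * cnj u = 1"
proof
  assume "u \<in> Eis_units"
  then obtain v where u: "u \<in> Eis" and v: "v \<in> Eis" and uv: "u * v = 1"
    unfolding Eis_units_def by blast
  obtain a b where a: "u = of_int a + of_int b * omega"
    using u unfolding Eis_iff by blast
  obtain c d where c: "v = of_int c + of_int d * omega"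
    using v unfolding Eis_iff by blast
  have "(u * cnj u) * (v * cnj v) = (u * v) * cnj (u * v)"
    by (simp add: algebra_simps)
  also have "\<dots> = 1"
    using uv by simp
  finally have "of_int ((a*a - a*b + b*b) * (c*c - c*d + d*d)) = (1::complex)"
    unfolding a c Eis_norm_eq of_int_mult .
  then have "(a*a - a*b + b*b) * (c*c - c*d + d*d) = 1"
    using of_int_eq_1_iff by blast
  then have "a*a - a*b + b*b = 1"
    using Eis_norm_form_nonneg[of a b] Eis_norm_form_nonneg[of c d] by (auto simp: zmult_eq_1_iff)
  then show "u \<in> Eis \<and> u * cnj u = 1"
    using u Eis_norm_eq[of a b] a by simp
qed (auto simp: Eis_units_def intro: Eis_cnj)

lemma Eis_units_cases:
  assumes "u \<in> Eis_units"
  shows "u = 1 \<or> u = -1 \<or> u = omega \<or> u = - omega \<or> u = -1 - omega \<or> u = 1 + omega"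
proof -
  obtain a b where z: "u = of_int a + of_int b * omega"
    using assms unfolding Eis_units_def Eis_iff by blast
  then have N1: "a*a - a*b + b*b = 1"
    using assms Eis_norm_eq[of a b] z unfolding Eis_units_iff by (metis of_int_eq_1_iff)
  then have h4: "(2*a - b)^2 + 3*b^2 = 4"
    by (simp add: algebra_simps power2_eq_square)
  then have "b^2 \<le> 1"
    using zero_le_power2[of "2*a - b"] by linarith
  then have "\<bar>b\<bar> \<le> 1"
    using abs_square_le_1 by blast
  then have b: "b \<in> {-1, 0, 1}"
    by auto
  have "(2*a - b)^2 \<le> 4"
    using h4 zero_le_power2[of b] by linarith
  then have "\<bar>2*a - b\<bar> \<le> 2"
    using power2_le_iff_abs_le[of 2 "2*a - b"] by simp
  then have "a \<in> {-1, 0, 1}"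
    using b by auto
  then show ?thesis
    using b N1 z by (auto simp: algebra_simps)
qed

lemma Eis_units_mult: "u \<in> Eis_units \<Longrightarrow> v \<in> Eis_units \<Longrightarrow> u * v \<in> Eis_units"
  unfolding Eis_units_iff by (auto intro: Eis_mult simp: algebra_simps)

lemma Eis_units_cnj: "u \<in> Eis_units \<Longrightarrow> cnj u \<in> Eis_units"
  unfolding Eis_units_iff by (auto intro: Eis_cnj simp: mult.commute)

lemma Eis_units_nonzero: "u \<in> Eis_units \<Longrightarrow> u \<noteq> 0"
  unfolding Eis_units_def by auto

lemma one_in_Eis_units: "1 \<in> Eis_units" and minus_one_in_Eis_units: "-1 \<in> Eis_units"
  unfolding Eis_units_iff by (auto intro: Eis_uminus)

lemma Eis_units_of_int: "of_int n \<in> Eis_units \<Longrightarrow> n = 1 \<or> n = -1"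
  using Eis_units_cases[of "of_int n"] by (auto simp: complex_eq_iff omega_eq_Complex)

text \<open>The six units are \<open>\<plusminus>1, \<plusminus>\<omega>, \<plusminus>\<omega>\<^sup>2\<close>, and \<open>\<omega> = (\<omega>\<^sup>2)\<^sup>2\<close>.\<close>
lemma Eis_units_square_up_to_sign:
  assumes "u \<in> Eis_units"
  shows "\<exists>t \<in> Eis_units. t * t = u \<or> t * t = - u"
proof -
  have "-1 - omega \<in> Eis"
    unfolding Eis_iff by (rule exI[of _ "-1"], rule exI[of _ "-1"]) simp
  then have "omega \<in> Eis_units" "-1 - omega \<in> Eis_units"
    unfolding Eis_units_iff by (auto simp: Eis_omega cnj_omega algebra_simps omega_times_omega)
  moreover have "(-1 - omega) * (-1 - omega) = omega"
    by (simp add: algebra_simps omega_times_omega)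
  ultimately show ?thesis
    using Eis_units_cases[OF assms] one_in_Eis_units omega_times_omega by (elim disjE) force+
qed

section \<open>Matrices and the group \<open>\<Gamma>\<close>\<close>

lemma index_mult_mat_sum:
  "A \<in> carrier_mat n m \<Longrightarrow> B \<in> carrier_mat m p \<Longrightarrow> i < n \<Longrightarrow> k < p \<Longrightarrow>
    (A * B) $$ (i, k) = (\<Sum>l<m. A $$ (i, l) * B $$ (l, k))"
  by (simp add: scalar_prod_def lessThan_atLeast0)

lemma index_mult_mat_vec_sum:
  "A \<in> carrier_mat n m \<Longrightarrow> x \<in> carrier_vec m \<Longrightarrow> i < n \<Longrightarrow>
    (A *\<^sub>v x) $ i = (\<Sum>k<m. A $$ (i, k) * x $ k)"
  by (simp add: scalar_prod_def lessThan_atLeast0)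

lemma index_mult_mat_unit_vec:
  "(A :: 'a :: semiring_1 mat) \<in> carrier_mat n n \<Longrightarrow> k < n \<Longrightarrow> i < n \<Longrightarrow>
    (A *\<^sub>v unit_vec n k) $ i = A $$ (i, k)"
  by (subst index_mult_mat_vec_sum[of A n n]) (auto simp: if_distrib[of "\<lambda>t. _ * t"] cong: if_cong)

lemma smult_mat_mult_vec:
  "A \<in> carrier_mat n m \<Longrightarrow> x \<in> carrier_vec m \<Longrightarrow>
    ((a :: 'a :: comm_semiring_0) \<cdot>\<^sub>m A) *\<^sub>v x = a \<cdot>\<^sub>v (A *\<^sub>v x)"
  by (rule eq_vecI) (auto simp: scalar_prod_def sum_distrib_left mult_ac)

lemma one_smult_mat [simp]: "(1 :: 'a :: monoid_mult) \<cdot>\<^sub>m A = A"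
  by (rule eq_matI) auto

lemma smult_one_mat_mult:
  "dim_row (A :: 'a :: comm_ring_1 mat) = n \<Longrightarrow> (u \<cdot>\<^sub>m 1\<^sub>m n) * A = u \<cdot>\<^sub>m A"
  using mult_smult_assoc_mat[of "1\<^sub>m n" n n A "dim_col A" u] by (auto intro: carrier_matI)

lemma mult_smult_one_mat:
  "dim_col (A :: 'a :: comm_ring_1 mat) = m \<Longrightarrow> A * (u \<cdot>\<^sub>m 1\<^sub>m m) = u \<cdot>\<^sub>m A"
  using mult_smult_distrib[of A "dim_row A" m "1\<^sub>m m" m u] by (auto intro: carrier_matI)

lemma smult_one_mat_mult_vec:
  "(x :: 'a :: comm_ring_1 vec) \<in> carrier_vec n \<Longrightarrow> (u \<cdot>\<^sub>m 1\<^sub>m n) *\<^sub>v x = u \<cdot>\<^sub>v x"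
  by (simp add: smult_mat_mult_vec[of "1\<^sub>m n" n n])

lemma mult_inverse_mat_mult:
  fixes A B A' B' :: "'a :: semiring_1 mat"
  assumes mats: "A \<in> carrier_mat n n" "B \<in> carrier_mat n n" "A' \<in> carrier_mat n n" "B' \<in> carrier_mat n n"
    and inv: "A' * A = 1\<^sub>m n" "B' * B = 1\<^sub>m n"
  shows "(B' * A') * (A * B) = 1\<^sub>m n"
proof -
  have "(B' * A') * (A * B) = B' * (A' * (A * B))"
    using mats by (simp add: assoc_mult_mat[of B' n n A' n "A * B" n])
  also have "A' * (A * B) = B"
    using mats inv by (simp flip: assoc_mult_mat[of A' n n A n B n])
  finally show ?thesis
    using inv by simp
qed

lemma smult_smult_mat: "a \<cdot>\<^sub>m (b \<cdot>\<^sub>m A) = (a * b :: 'a :: semiring_0) \<cdot>\<^sub>m A"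
  by (rule eq_matI) (auto simp: mult.assoc)

lemma Eis_mat_carrier: "A \<in> Eis_mat \<Longrightarrow> A \<in> carrier_mat 5 5"
  unfolding Eis_mat_def by auto

lemma Eis_mat_mult: "A \<in> Eis_mat \<Longrightarrow> B \<in> Eis_mat \<Longrightarrow> A * B \<in> Eis_mat"
  unfolding Eis_mat_def by (auto simp: index_mult_mat_sum[of _ 5 5 _ 5] intro!: Eis_sum Eis_mult)

lemma Eis_mat_one: "1\<^sub>m 5 \<in> Eis_mat"
  unfolding Eis_mat_def by auto

lemma Eis_mat_smult: "t \<in> Eis \<Longrightarrow> A \<in> Eis_mat \<Longrightarrow> t \<cdot>\<^sub>m A \<in> Eis_mat"
  unfolding Eis_mat_def by (auto intro!: Eis_mult)

lemma Eis_mat_mult_vec_Lambda: "A \<in> Eis_mat \<Longrightarrow> x \<in> Lambda \<Longrightarrow> A *\<^sub>v x \<in> Lambda"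
  unfolding Eis_mat_def Lambda_def by (auto simp: index_mult_mat_vec_sum[of _ 5 5] intro!: Eis_sum Eis_mult)

lemma Gamma_carrier_carrier_mat: "A \<in> Gamma_carrier \<Longrightarrow> A \<in> carrier_mat 5 5"
  unfolding Gamma_carrier_def Eis_mat_def by auto

lemma Gamma_carrier_herm:
  "A \<in> Gamma_carrier \<Longrightarrow> x \<in> Lambda \<Longrightarrow> y \<in> Lambda \<Longrightarrow> herm (A *\<^sub>v x) (A *\<^sub>v y) = herm x y"
  unfolding Gamma_carrier_def by auto

lemma Gamma_carrier_mult:
  assumes A: "A \<in> Gamma_carrier" and B: "B \<in> Gamma_carrier"
  shows "A * B \<in> Gamma_carrier"
proof -
  obtain A' where A': "A' \<in> Eis_mat" "A' * A = 1\<^sub>m 5" "A * A' = 1\<^sub>m 5"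
    using A unfolding Gamma_carrier_def by blast
  obtain B' where B': "B' \<in> Eis_mat" "B' * B = 1\<^sub>m 5" "B * B' = 1\<^sub>m 5"
    using B unfolding Gamma_carrier_def by blast
  have mats: "A \<in> carrier_mat 5 5" "B \<in> carrier_mat 5 5" "A' \<in> carrier_mat 5 5" "B' \<in> carrier_mat 5 5"
    using A B A'(1) B'(1) Gamma_carrier_carrier_mat Eis_mat_carrier by auto
  have inverse: "(B' * A') * (A * B) = 1\<^sub>m 5" "(A * B) * (B' * A') = 1\<^sub>m 5"
    using mult_inverse_mat_mult[OF mats] mult_inverse_mat_mult[of B' 5 A' B A] mats A' B' by auto
  have "herm ((A * B) *\<^sub>v x) ((A * B) *\<^sub>v y) = herm x y" if "x \<in> Lambda" "y \<in> Lambda" for x y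
  proof -
    have "x \<in> carrier_vec 5" "y \<in> carrier_vec 5"
      using that unfolding Lambda_def by auto
    then have "(A * B) *\<^sub>v x = A *\<^sub>v (B *\<^sub>v x)" "(A * B) *\<^sub>v y = A *\<^sub>v (B *\<^sub>v y)"
      using mats by auto
    moreover have "B *\<^sub>v x \<in> Lambda" "B *\<^sub>v y \<in> Lambda"
      using Eis_mat_mult_vec_Lambda B that unfolding Gamma_carrier_def by auto
    ultimately show ?thesis
      using A B that Gamma_carrier_herm by simp
  qed
  moreover have "A * B \<in> Eis_mat" "B' * A' \<in> Eis_mat"
    using A B A' B' Eis_mat_mult unfolding Gamma_carrier_def by auto
  ultimately show ?thesis
    unfolding Gamma_carrier_def using inverse by blast
qed

lemma Gamma_carrier_one: "1\<^sub>m 5 \<in> Gamma_carrier"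
  unfolding Gamma_carrier_def using Eis_mat_one by (auto simp: Lambda_def intro!: bexI[of _ "1\<^sub>m 5"])

lemma Gamma_carrier_inverse:
  assumes A: "A \<in> Gamma_carrier" and A': "A' \<in> Eis_mat" "A' * A = 1\<^sub>m 5" "A * A' = 1\<^sub>m 5"
  shows "A' \<in> Gamma_carrier"
proof -
  have "herm (A' *\<^sub>v x) (A' *\<^sub>v y) = herm x y" if "x \<in> Lambda" "y \<in> Lambda" for x y
  proof -
    have "A \<in> carrier_mat 5 5" "A' \<in> carrier_mat 5 5"
      using A A'(1) Gamma_carrier_carrier_mat Eis_mat_carrier by auto
    then have "A *\<^sub>v (A' *\<^sub>v x) = x" "A *\<^sub>v (A' *\<^sub>v y) = y"
      using that A'(3) unfolding Lambda_def by (auto simp flip: assoc_mult_mat_vec)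
    moreover have "A' *\<^sub>v x \<in> Lambda" "A' *\<^sub>v y \<in> Lambda"
      using Eis_mat_mult_vec_Lambda A' that by auto
    ultimately show ?thesis
      using A Gamma_carrier_herm by metis
  qed
  then show ?thesis
    unfolding Gamma_carrier_def using A A' unfolding Gamma_carrier_def by blast
qed

lemma carrier_Gamma: "carrier Gamma = Gamma_carrier"
  and mult_Gamma: "X \<otimes>\<^bsub>Gamma\<^esub> Y = X * Y"
  and one_Gamma: "\<one>\<^bsub>Gamma\<^esub> = 1\<^sub>m 5"
  by (simp_all add: Gamma_def)

lemma group_Gamma: "group Gamma"
proof (rule groupI)
  fix A B C assume "A \<in> carrier Gamma" "B \<in> carrier Gamma" "C \<in> carrier Gamma"
  then show "A \<otimes>\<^bsub>Gamma\<^esub> B \<otimes>\<^bsub>Gamma\<^esub> C = A \<otimes>\<^bsub>Gamma\<^esub> (B \<otimes>\<^bsub>Gamma\<^esub> C)"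
    unfolding carrier_Gamma mult_Gamma
    using Gamma_carrier_carrier_mat by (simp add: assoc_mult_mat[of _ 5 5 _ 5 _ 5])
next
  fix A assume A: "A \<in> carrier Gamma"
  then obtain A' where A': "A' \<in> Eis_mat" "A' * A = 1\<^sub>m 5" "A * A' = 1\<^sub>m 5"
    unfolding carrier_Gamma Gamma_carrier_def by auto
  then show "\<exists>B\<in>carrier Gamma. B \<otimes>\<^bsub>Gamma\<^esub> A = \<one>\<^bsub>Gamma\<^esub>"
    using Gamma_carrier_inverse A unfolding carrier_Gamma mult_Gamma one_Gamma by blast
qed (auto simp: carrier_Gamma mult_Gamma one_Gamma Gamma_carrier_mult Gamma_carrier_one
    dest: Gamma_carrier_carrier_mat)

lemma herm_smult:
  "x \<in> carrier_vec 5 \<Longrightarrow> y \<in> carrier_vec 5 \<Longrightarrow> herm (a \<cdot>\<^sub>v x) (b \<cdot>\<^sub>v y) = a * cnj b * herm x y"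
  unfolding herm_def by (simp add: sum_distrib_left algebra_simps)

lemma unit_scalar_in_Gamma_carrier:
  assumes u: "u \<in> Eis_units"
  shows "u \<cdot>\<^sub>m 1\<^sub>m 5 \<in> Gamma_carrier"
proof -
  have norm: "cnj u * u = 1" "u * cnj u = 1"
    using u unfolding Eis_units_iff by (auto simp: mult.commute)
  have "(cnj u \<cdot>\<^sub>m 1\<^sub>m 5) * (u \<cdot>\<^sub>m 1\<^sub>m 5) = 1\<^sub>m 5" "(u \<cdot>\<^sub>m 1\<^sub>m 5) * (cnj u \<cdot>\<^sub>m 1\<^sub>m 5) = 1\<^sub>m 5"
    by (simp_all add: smult_one_mat_mult smult_smult_mat norm)
  moreover have "herm ((u \<cdot>\<^sub>m 1\<^sub>m 5) *\<^sub>v x) ((u \<cdot>\<^sub>m 1\<^sub>m 5) *\<^sub>v y) = herm x y"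
    if "x \<in> Lambda" "y \<in> Lambda" for x y
    using that norm by (simp add: Lambda_def smult_one_mat_mult_vec herm_smult)
  moreover have "c \<cdot>\<^sub>m 1\<^sub>m 5 \<in> Eis_mat" if "c \<in> Eis" for c
    using Eis_mat_smult[OF that Eis_mat_one] .
  ultimately show ?thesis
    unfolding Gamma_carrier_def using u Eis_units_cnj[OF u] unfolding Eis_units_def by blast
qed

lemma unit_scalars_subset_Gamma_carrier: "unit_scalars \<subseteq> Gamma_carrier"
  unfolding unit_scalars_def using unit_scalar_in_Gamma_carrier by auto

lemma subgroup_unit_scalars: "subgroup unit_scalars Gamma"
proof -
  interpret group Gamma
    by (rule group_Gamma)
  show ?thesis
  proof (rule subgroupI)
    show "unit_scalars \<subseteq> carrier Gamma"
      using unit_scalars_subset_Gamma_carrier carrier_Gamma by simp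
    show "unit_scalars \<noteq> {}"
      unfolding unit_scalars_def using one_in_Eis_units by auto
  next
    fix A assume "A \<in> unit_scalars"
    then obtain u where u: "u \<in> Eis_units" "A = u \<cdot>\<^sub>m 1\<^sub>m 5"
      unfolding unit_scalars_def by auto
    have "(cnj u \<cdot>\<^sub>m 1\<^sub>m 5) \<otimes>\<^bsub>Gamma\<^esub> A = \<one>\<^bsub>Gamma\<^esub>"
      using u unfolding Eis_units_iff mult_Gamma one_Gamma
      by (simp add: smult_one_mat_mult smult_smult_mat mult.commute)
    then have "inv\<^bsub>Gamma\<^esub> A = cnj u \<cdot>\<^sub>m 1\<^sub>m 5"
      by (intro inv_equality) (auto simp: carrier_Gamma u unit_scalar_in_Gamma_carrier Eis_units_cnj)
    then show "inv\<^bsub>Gamma\<^esub> A \<in> unit_scalars"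
      unfolding unit_scalars_def using Eis_units_cnj[OF u(1)] by auto
  next
    fix A B assume "A \<in> unit_scalars" "B \<in> unit_scalars"
    then show "A \<otimes>\<^bsub>Gamma\<^esub> B \<in> unit_scalars"
      unfolding unit_scalars_def mult_Gamma
      by (auto simp: smult_one_mat_mult smult_smult_mat intro: Eis_units_mult)
  qed
qed

lemma normal_unit_scalars: "unit_scalars \<lhd> Gamma"
proof -
  interpret group Gamma
    by (rule group_Gamma)
  show ?thesis
  proof (rule normalI[OF subgroup_unit_scalars], intro ballI)
    fix A assume "A \<in> carrier Gamma"
    then have "dim_row A = 5" "dim_col A = 5"
      using carrier_Gamma Gamma_carrier_carrier_mat by auto
    then have "(u \<cdot>\<^sub>m 1\<^sub>m 5) * A = A * (u \<cdot>\<^sub>m 1\<^sub>m 5)" for u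
      by (simp add: smult_one_mat_mult mult_smult_one_mat)
    then show "unit_scalars #>\<^bsub>Gamma\<^esub> A = A <#\<^bsub>Gamma\<^esub> unit_scalars"
      unfolding r_coset_def l_coset_def mult_Gamma unit_scalars_def by blast
  qed
qed

lemma group_PGamma: "group PGamma"
  unfolding PGamma_def using normal.factorgroup_is_group[OF normal_unit_scalars] .

lemma carrier_PGamma: "carrier PGamma = rcosets\<^bsub>Gamma\<^esub> unit_scalars"
  unfolding PGamma_def FactGroup_def by simp

lemma unit_scalars_coset_elem:
  "B \<in> unit_scalars #>\<^bsub>Gamma\<^esub> A \<Longrightarrow> dim_row A = 5 \<Longrightarrow> \<exists>u \<in> Eis_units. B = u \<cdot>\<^sub>m A"
  unfolding r_coset_def unit_scalars_def mult_Gamma by (auto simp: smult_one_mat_mult)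

section \<open>The real hyperbolic subspaces \<open>H\<^sup>4\<^sub>j\<close>\<close>

definition xi_sign :: "nat \<Rightarrow> nat \<Rightarrow> complex" where
  "xi_sign j i = (if i < 5 - j then 1 else -1)"

lemma xi_sign_times_xi_sign [simp]: "xi_sign j i * xi_sign j i = 1"
  and cnj_xi_sign [simp]: "cnj (xi_sign j i) = xi_sign j i"
  and xi_sign_nonzero [simp]: "xi_sign j i \<noteq> 0"
  and xi_sign_0: "j \<le> 4 \<Longrightarrow> xi_sign j 0 = 1"
  unfolding xi_sign_def by auto

lemma dim_xi [simp]: "dim_vec (xi j v) = 5"
  and xi_carrier [simp]: "xi j v \<in> carrier_vec 5"
  unfolding xi_def by simp_all

lemma index_xi: "i < 5 \<Longrightarrow> xi j v $ i = xi_sign j i * cnj (v $ i)"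
  unfolding xi_def xi_sign_def by auto

lemma xi_smult: "v \<in> carrier_vec 5 \<Longrightarrow> xi j (c \<cdot>\<^sub>v v) = cnj c \<cdot>\<^sub>v xi j v"
  unfolding xi_def by (rule eq_vecI) auto

lemma xi_xi: "v \<in> carrier_vec 5 \<Longrightarrow> xi j (xi j v) = v"
  unfolding xi_def by (rule eq_vecI) auto

text \<open>The matrix of the \<open>\<complex>\<close>-linear map \<open>\<xi>\<^sub>j \<circ> A \<circ> \<xi>\<^sub>j\<close>.\<close>
definition xi_conj :: "nat \<Rightarrow> complex mat \<Rightarrow> complex mat" where
  "xi_conj j A = mat 5 5 (\<lambda>(i, k). xi_sign j i * xi_sign j k * cnj (A $$ (i, k)))"

lemma xi_conj_carrier [simp]: "xi_conj j A \<in> carrier_mat 5 5"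
  and dim_xi_conj [simp]: "dim_row (xi_conj j A) = 5" "dim_col (xi_conj j A) = 5"
  unfolding xi_conj_def by simp_all

lemma index_xi_conj:
  "i < 5 \<Longrightarrow> k < 5 \<Longrightarrow> xi_conj j A $$ (i, k) = xi_sign j i * xi_sign j k * cnj (A $$ (i, k))"
  unfolding xi_conj_def by simp

lemma xi_conj_mult_vec:
  assumes A: "A \<in> carrier_mat 5 5" and x: "x \<in> carrier_vec 5"
  shows "xi_conj j A *\<^sub>v x = xi j (A *\<^sub>v xi j x)"
proof (rule eq_vecI)
  fix i assume "i < dim_vec (xi j (A *\<^sub>v xi j x))"
  then have i: "i < 5"
    by simp
  have "xi j (A *\<^sub>v xi j x) $ i = xi_sign j i * cnj (\<Sum>k<5. A $$ (i, k) * (xi_sign j k * cnj (x $ k)))"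
    using index_xi[OF i] index_mult_mat_vec_sum[OF A xi_carrier i] by (simp add: index_xi)
  also have "\<dots> = (\<Sum>k<5. xi_conj j A $$ (i, k) * x $ k)"
    unfolding cnj_sum sum_distrib_left by (intro sum.cong) (auto simp: index_xi_conj i mult_ac)
  also have "\<dots> = (xi_conj j A *\<^sub>v x) $ i"
    using index_mult_mat_vec_sum[OF xi_conj_carrier x i] by simp
  finally show "(xi_conj j A *\<^sub>v x) $ i = xi j (A *\<^sub>v xi j x) $ i"
    by simp
qed simp

lemma xi_conj_mult:
  assumes A: "A \<in> carrier_mat 5 5" and B: "B \<in> carrier_mat 5 5"
  shows "xi_conj j (A * B) = xi_conj j A * xi_conj j B"
proof (rule eq_matI)
  fix i k assume "i < dim_row (xi_conj j A * xi_conj j B)" "k < dim_col (xi_conj j A * xi_conj j B)"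
  then have i: "i < 5" and k: "k < 5"
    by auto
  have "(xi_conj j A * xi_conj j B) $$ (i, k) = (\<Sum>l<5. xi_conj j A $$ (i, l) * xi_conj j B $$ (l, k))"
    using index_mult_mat_sum[OF xi_conj_carrier xi_conj_carrier i k] .
  also have "\<dots> = (\<Sum>l<5. xi_sign j i * xi_sign j k * cnj (A $$ (i, l) * B $$ (l, k)))"
  proof (rule sum.cong)
    fix l assume "l \<in> {..<5::nat}"
    then have "xi_conj j A $$ (i, l) * xi_conj j B $$ (l, k)
        = xi_sign j i * xi_sign j k * (xi_sign j l * xi_sign j l) * cnj (A $$ (i, l) * B $$ (l, k))"
      using i k by (simp add: index_xi_conj mult_ac)
    then show "xi_conj j A $$ (i, l) * xi_conj j B $$ (l, k)
        = xi_sign j i * xi_sign j k * cnj (A $$ (i, l) * B $$ (l, k))"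
      by simp
  qed simp
  also have "\<dots> = xi_conj j (A * B) $$ (i, k)"
    using i k index_mult_mat_sum[OF A B i k] by (simp add: index_xi_conj sum_distrib_left cnj_sum)
  finally show "xi_conj j (A * B) $$ (i, k) = (xi_conj j A * xi_conj j B) $$ (i, k)"
    by simp
qed auto

lemma xi_conj_one: "xi_conj j (1\<^sub>m 5) = 1\<^sub>m 5"
  by (rule eq_matI) (auto simp: index_xi_conj)

lemma xi_conj_smult: "A \<in> carrier_mat 5 5 \<Longrightarrow> xi_conj j (t \<cdot>\<^sub>m A) = cnj t \<cdot>\<^sub>m xi_conj j A"
  by (rule eq_matI) (auto simp: index_xi_conj mult_ac)

lemma xi_conj_fixed_inverse:
  assumes A: "A \<in> carrier_mat 5 5" and A': "A' \<in> carrier_mat 5 5" "A' * A = 1\<^sub>m 5" "A * A' = 1\<^sub>m 5"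
    and fixed: "xi_conj j A = A"
  shows "xi_conj j A' = A'"
proof -
  have "xi_conj j A' = xi_conj j A' * (A * A')"
    using A'(3) by simp
  also have "\<dots> = (xi_conj j A' * xi_conj j A) * A'"
    using fixed A A' by (simp add: assoc_mult_mat[of _ 5 5 _ 5 _ 5])
  also have "\<dots> = A'"
    using A A' by (simp flip: xi_conj_mult add: xi_conj_one)
  finally show ?thesis .
qed

lemma xi_conj_Eis_mat: "A \<in> Eis_mat \<Longrightarrow> xi_conj j A \<in> Eis_mat"
  unfolding Eis_mat_def by (auto simp: index_xi_conj xi_sign_def intro!: Eis_cnj Eis_uminus)

lemma cline_eq_range: "cline v = range (\<lambda>c. c \<cdot>\<^sub>v v)"
  unfolding cline_def by auto

lemma self_in_cline: "v \<in> carrier_vec n \<Longrightarrow> v \<in> cline v"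
  unfolding cline_def by (auto intro!: exI[of _ 1])

lemma act_line_cline:
  "A \<in> carrier_mat 5 5 \<Longrightarrow> v \<in> carrier_vec 5 \<Longrightarrow> act_line A (cline v) = cline (A *\<^sub>v v)"
  unfolding act_line_def cline_eq_range by (auto simp: image_image mult_mat_vec)

lemma cline_subset_carrier: "v \<in> carrier_vec 5 \<Longrightarrow> cline v \<subseteq> carrier_vec 5"
  unfolding cline_def by auto

lemma H4_iff:
  "L \<in> H4 j \<longleftrightarrow>
    (\<exists>v. L = cline v \<and> v \<in> carrier_vec 5 \<and> Re (herm v v) < 0 \<and> (\<exists>e. xi j v = e \<cdot>\<^sub>v v))"
proof
  assume "L \<in> H4 j"
  then obtain v where v: "L = cline v" "v \<in> carrier_vec 5" "Re (herm v v) < 0" "xi j ` L = L"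
    unfolding H4_def CH4_def by auto
  then have "xi j v \<in> cline v"
    using self_in_cline by blast
  then show "\<exists>v. L = cline v \<and> v \<in> carrier_vec 5 \<and> Re (herm v v) < 0 \<and> (\<exists>e. xi j v = e \<cdot>\<^sub>v v)"
    using v unfolding cline_def by auto
next
  assume "\<exists>v. L = cline v \<and> v \<in> carrier_vec 5 \<and> Re (herm v v) < 0 \<and> (\<exists>e. xi j v = e \<cdot>\<^sub>v v)"
  then obtain v e where v: "L = cline v" "v \<in> carrier_vec 5" "Re (herm v v) < 0" "xi j v = e \<cdot>\<^sub>v v"
    by auto
  have into: "xi j ` cline v \<subseteq> cline v"
  proof
    fix y assume "y \<in> xi j ` cline v"
    then obtain c where "y = xi j (c \<cdot>\<^sub>v v)"
      unfolding cline_def by auto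
    then have "y = (cnj c * e) \<cdot>\<^sub>v v"
      using v by (simp add: xi_smult smult_smult_assoc)
    then show "y \<in> cline v"
      unfolding cline_def by auto
  qed
  moreover have "cline v \<subseteq> xi j ` cline v"
  proof
    fix y assume "y \<in> cline v"
    then have "y = xi j (xi j y)" "xi j y \<in> cline v"
      using into xi_xi cline_subset_carrier[OF v(2)] by auto
    then show "y \<in> xi j ` cline v"
      by blast
  qed
  ultimately show "L \<in> H4 j"
    unfolding H4_def CH4_def using v by auto
qed

lemma H4_subset_carrier: "L \<in> H4 j \<Longrightarrow> L \<subseteq> carrier_vec 5"
  using H4_iff cline_subset_carrier by blast

definition preserves_herm :: "complex mat \<Rightarrow> bool" where
  "preserves_herm A \<longleftrightarrow> (\<forall>x \<in> carrier_vec 5. herm (A *\<^sub>v x) (A *\<^sub>v x) = herm x x)"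

lemma preserves_herm_smult:
  assumes A: "A \<in> carrier_mat 5 5" "preserves_herm A" and u: "u * cnj u = 1"
  shows "preserves_herm (u \<cdot>\<^sub>m A)"
  using assms unfolding preserves_herm_def by (simp add: smult_mat_mult_vec[of A 5 5] herm_smult)

lemma act_line_in_H4:
  assumes A: "A \<in> carrier_mat 5 5" "preserves_herm A" and conj: "xi_conj j A = \<mu> \<cdot>\<^sub>m A"
    and L: "L \<in> H4 j"
  shows "act_line A L \<in> H4 j"
proof -
  obtain v e where v: "L = cline v" "v \<in> carrier_vec 5" "Re (herm v v) < 0" "xi j v = e \<cdot>\<^sub>v v"
    using L H4_iff by blast
  have "xi j (A *\<^sub>v v) = xi j (A *\<^sub>v xi j (xi j v))"
    using v(2) by (simp add: xi_xi)
  also have "\<dots> = xi_conj j A *\<^sub>v xi j v"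
    using xi_conj_mult_vec[OF A(1) xi_carrier] by simp
  also have "\<dots> = (\<mu> \<cdot>\<^sub>m A) *\<^sub>v (e \<cdot>\<^sub>v v)"
    unfolding conj v(4) ..
  also have "\<dots> = (\<mu> * e) \<cdot>\<^sub>v (A *\<^sub>v v)"
    using A(1) v(2) by (simp add: smult_mat_mult_vec[of A 5 5] mult_mat_vec smult_smult_assoc)
  finally have "xi j (A *\<^sub>v v) = (\<mu> * e) \<cdot>\<^sub>v (A *\<^sub>v v)" .
  moreover have "herm (A *\<^sub>v v) (A *\<^sub>v v) = herm v v"
    using A(2) v(2) unfolding preserves_herm_def by auto
  ultimately show ?thesis
    unfolding H4_iff act_line_cline[OF A(1) v(2)] v(1) using v A by (intro exI[of _ "A *\<^sub>v v"]) auto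
qed

lemma act_line_mult:
  "A \<in> carrier_mat 5 5 \<Longrightarrow> B \<in> carrier_mat 5 5 \<Longrightarrow> L \<subseteq> carrier_vec 5 \<Longrightarrow>
    act_line (A * B) L = act_line A (act_line B L)"
  unfolding act_line_def by (auto simp: image_image subsetD)

lemma act_line_mult_image_H4:
  "A \<in> carrier_mat 5 5 \<Longrightarrow> B \<in> carrier_mat 5 5 \<Longrightarrow>
    act_line (A * B) ` H4 j = act_line A ` act_line B ` H4 j"
  using act_line_mult H4_subset_carrier by (simp add: image_image)

lemma act_line_scalar:
  assumes "u \<noteq> 0" and "L \<in> H4 j"
  shows "act_line (u \<cdot>\<^sub>m 1\<^sub>m 5) L = L"
proof -
  obtain v where v: "L = cline v" "v \<in> carrier_vec 5"
    using assms(2) H4_iff by blast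
  have "range (\<lambda>c. c * u) = UNIV"
    by (rule surjI[where f = "\<lambda>c. c / u"]) (simp add: assms(1))
  then have "range (\<lambda>c. (c * u) \<cdot>\<^sub>v v) = range (\<lambda>c. c \<cdot>\<^sub>v v)"
    using image_image[of "\<lambda>c. c \<cdot>\<^sub>v v" "\<lambda>c. c * u" UNIV] by simp
  moreover have "act_line (u \<cdot>\<^sub>m 1\<^sub>m 5) L = cline (u \<cdot>\<^sub>v v)"
    using act_line_cline[OF _ v(2), of "u \<cdot>\<^sub>m 1\<^sub>m 5"] smult_one_mat_mult_vec[OF v(2)] v(1) by simp
  ultimately show ?thesis
    unfolding v(1) cline_eq_range by (simp add: smult_smult_assoc)
qed

lemma act_line_one_image_H4: "act_line (1\<^sub>m 5) ` H4 j = H4 j"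
proof -
  have "act_line (1\<^sub>m 5) ` H4 j = (\<lambda>L. L) ` H4 j"
    using act_line_scalar[of 1] by (intro image_cong) simp_all
  then show ?thesis
    by simp
qed

lemma act_line_image_H4_eq:
  assumes A: "A \<in> carrier_mat 5 5" "preserves_herm A" "xi_conj j A = \<mu> \<cdot>\<^sub>m A"
    and B: "B \<in> carrier_mat 5 5" "preserves_herm B" "xi_conj j B = \<nu> \<cdot>\<^sub>m B"
    and AB: "A * B = 1\<^sub>m 5"
  shows "act_line A ` H4 j = H4 j"
proof -
  have A_into: "act_line A ` H4 j \<subseteq> H4 j" and B_into: "act_line B ` H4 j \<subseteq> H4 j"
    by (rule image_subsetI, erule act_line_in_H4[OF A], rule image_subsetI, erule act_line_in_H4[OF B])
  have "act_line A ` act_line B ` H4 j = H4 j"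
    unfolding act_line_mult_image_H4[OF A(1) B(1), symmetric] AB by (rule act_line_one_image_H4)
  then have "H4 j \<subseteq> act_line A ` H4 j"
    using image_mono[OF B_into, of "act_line A"] by simp
  with A_into show ?thesis
    by (rule subset_antisym)
qed

definition H4_stabilizer :: "nat \<Rightarrow> complex mat set set" where
  "H4_stabilizer j = {C \<in> carrier PGamma. \<forall>M \<in> C. act_line M ` H4 j = H4 j}"

lemma PGammaR_eq: "PGammaR j = PGamma\<lparr>carrier := H4_stabilizer j\<rparr>"
  unfolding PGammaR_def H4_stabilizer_def by simp

lemma carrier_PGammaR: "carrier (PGammaR j) = H4_stabilizer j"
  and mult_PGammaR: "X \<otimes>\<^bsub>PGammaR j\<^esub> Y = X <#>\<^bsub>Gamma\<^esub> Y"
  and one_PGammaR: "\<one>\<^bsub>PGammaR j\<^esub> = unit_scalars"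
  unfolding PGammaR_eq PGamma_def FactGroup_def by simp_all

lemma PGamma_elem_Gamma: "C \<in> carrier PGamma \<Longrightarrow> A \<in> C \<Longrightarrow> A \<in> carrier Gamma"
  using subgroup.rcosets_carrier[OF subgroup_unit_scalars group_Gamma] unfolding carrier_PGamma by blast

lemma PGamma_elem_carrier_mat: "C \<in> carrier PGamma \<Longrightarrow> A \<in> C \<Longrightarrow> A \<in> carrier_mat 5 5"
  using PGamma_elem_Gamma Gamma_carrier_carrier_mat unfolding carrier_Gamma by blast

lemma act_line_inv_image_H4:
  assumes A: "A \<in> carrier Gamma" and stab: "act_line A ` H4 j = H4 j"
  shows "act_line (inv\<^bsub>Gamma\<^esub> A) ` H4 j = H4 j"
proof -
  interpret group Gamma
    by (rule group_Gamma)
  have "inv\<^bsub>Gamma\<^esub> A * A = 1\<^sub>m 5" "inv\<^bsub>Gamma\<^esub> A \<in> carrier_mat 5 5" "A \<in> carrier_mat 5 5"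
    using A l_inv inv_closed Gamma_carrier_carrier_mat unfolding mult_Gamma one_Gamma carrier_Gamma by auto
  then have "act_line (inv\<^bsub>Gamma\<^esub> A) ` act_line A ` H4 j = H4 j"
    using act_line_mult_image_H4 act_line_one_image_H4 by metis
  then show ?thesis
    unfolding stab .
qed

lemma subgroup_H4_stabilizer: "subgroup (H4_stabilizer j) PGamma"
proof -
  interpret N: normal unit_scalars Gamma
    by (rule normal_unit_scalars)
  interpret P: group PGamma
    by (rule group_PGamma)
  show ?thesis
  proof (rule P.subgroupI)
    show "H4_stabilizer j \<subseteq> carrier PGamma"
      unfolding H4_stabilizer_def by auto
  next
    have "act_line M ` H4 j = H4 j" if "M \<in> unit_scalars" for M
      using that Eis_units_nonzero act_line_scalar unfolding unit_scalars_def by auto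
    moreover have "unit_scalars \<in> carrier PGamma"
      using P.one_closed unfolding PGamma_def FactGroup_def by simp
    ultimately show "H4_stabilizer j \<noteq> {}"
      unfolding H4_stabilizer_def by auto
  next
    fix C assume C: "C \<in> H4_stabilizer j"
    then have C_carrier: "C \<in> carrier PGamma"
      unfolding H4_stabilizer_def by auto
    have "act_line M ` H4 j = H4 j" if M: "M \<in> set_inv\<^bsub>Gamma\<^esub> C" for M
    proof -
      obtain A where "A \<in> C" "M = inv\<^bsub>Gamma\<^esub> A"
        using M unfolding SET_INV_def by auto
      then show ?thesis
        using C act_line_inv_image_H4 PGamma_elem_Gamma[OF C_carrier] unfolding H4_stabilizer_def by simp
    qed
    moreover have "inv\<^bsub>PGamma\<^esub> C = set_inv\<^bsub>Gamma\<^esub> C"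
      using N.inv_FactGroup C_carrier unfolding PGamma_def by auto
    ultimately show "inv\<^bsub>PGamma\<^esub> C \<in> H4_stabilizer j"
      unfolding H4_stabilizer_def using P.inv_closed[OF C_carrier] by auto
  next
    fix C D assume C: "C \<in> H4_stabilizer j" and D: "D \<in> H4_stabilizer j"
    then have carriers: "C \<in> carrier PGamma" "D \<in> carrier PGamma"
      unfolding H4_stabilizer_def by auto
    have "act_line M ` H4 j = H4 j" if M: "M \<in> C <#>\<^bsub>Gamma\<^esub> D" for M
    proof -
      obtain A B where "A \<in> C" "B \<in> D" "M = A * B"
        using M unfolding set_mult_def mult_Gamma by auto
      then show ?thesis
        using act_line_mult_image_H4 PGamma_elem_carrier_mat carriers C D
        unfolding H4_stabilizer_def by simp
    qed
    moreover have "C \<otimes>\<^bsub>PGamma\<^esub> D = C <#>\<^bsub>Gamma\<^esub> D"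
      unfolding PGamma_def FactGroup_def by simp
    ultimately show "C \<otimes>\<^bsub>PGamma\<^esub> D \<in> H4_stabilizer j"
      unfolding H4_stabilizer_def using P.m_closed[OF carriers] by auto
  qed
qed

lemma group_PGammaR: "group (PGammaR j)"
  unfolding PGammaR_eq using subgroup.subgroup_is_group[OF subgroup_H4_stabilizer group_PGamma] .

section \<open>The orthogonal group of \<open>\<Psi>\<^sub>j\<close>\<close>

lemma carrier_O_Psi: "carrier (O_Psi j) = {M \<in> carrier_mat 5 5.
      (\<exists>N \<in> carrier_mat 5 5. N * M = 1\<^sub>m 5 \<and> M * N = 1\<^sub>m 5) \<and>
      (\<forall>y \<in> carrier_vec 5. Psi j (M *\<^sub>v y) = Psi j y)}"
  and mult_O_Psi: "M \<otimes>\<^bsub>O_Psi j\<^esub> N = M * N"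
  and one_O_Psi: "\<one>\<^bsub>O_Psi j\<^esub> = 1\<^sub>m 5"
  by (simp_all add: O_Psi_def)

lemma O_Psi_carrier_mat: "M \<in> carrier (O_Psi j) \<Longrightarrow> M \<in> carrier_mat 5 5"
  unfolding carrier_O_Psi by auto

lemma O_Psi_inverse:
  assumes M: "M \<in> carrier (O_Psi j)" and N: "N \<in> carrier_mat 5 5" "N * M = 1\<^sub>m 5" "M * N = 1\<^sub>m 5"
  shows "N \<in> carrier (O_Psi j)"
proof -
  have "Psi j (N *\<^sub>v y) = Psi j y" if "y \<in> carrier_vec 5" for y
  proof -
    have "M *\<^sub>v (N *\<^sub>v y) = y"
      using O_Psi_carrier_mat[OF M] N that by (auto simp flip: assoc_mult_mat_vec)
    moreover have "Psi j (M *\<^sub>v (N *\<^sub>v y)) = Psi j (N *\<^sub>v y)"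
      using M N(1) that unfolding carrier_O_Psi by auto
    ultimately show ?thesis
      by simp
  qed
  then show ?thesis
    unfolding carrier_O_Psi using N O_Psi_carrier_mat[OF M] by blast
qed

lemma O_Psi_mult:
  assumes A: "A \<in> carrier (O_Psi j)" and B: "B \<in> carrier (O_Psi j)"
  shows "A * B \<in> carrier (O_Psi j)"
proof -
  obtain A' where A': "A' \<in> carrier_mat 5 5" "A' * A = 1\<^sub>m 5" "A * A' = 1\<^sub>m 5"
    using A unfolding carrier_O_Psi by blast
  obtain B' where B': "B' \<in> carrier_mat 5 5" "B' * B = 1\<^sub>m 5" "B * B' = 1\<^sub>m 5"
    using B unfolding carrier_O_Psi by blast
  have mats: "A \<in> carrier_mat 5 5" "B \<in> carrier_mat 5 5"
    using A B O_Psi_carrier_mat by auto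
  have "(B' * A') * (A * B) = 1\<^sub>m 5" "(A * B) * (B' * A') = 1\<^sub>m 5"
    using mult_inverse_mat_mult[OF mats] mult_inverse_mat_mult[of B' 5 A' B A] mats A' B' by auto
  moreover have "Psi j ((A * B) *\<^sub>v y) = Psi j y" if "y \<in> carrier_vec 5" for y
  proof -
    have "(A * B) *\<^sub>v y = A *\<^sub>v (B *\<^sub>v y)"
      using mats that by auto
    then show ?thesis
      using A B that mats unfolding carrier_O_Psi by auto
  qed
  ultimately show ?thesis
    unfolding carrier_O_Psi using mats A' B' by (intro CollectI conjI bexI[of _ "B' * A'"]) auto
qed

lemma O_Psi_one: "1\<^sub>m 5 \<in> carrier (O_Psi j)"
  unfolding carrier_O_Psi by (auto intro!: bexI[of _ "1\<^sub>m 5"])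

lemma O_Psi_minus_one: "(-1) \<cdot>\<^sub>m 1\<^sub>m 5 \<in> carrier (O_Psi j)"
proof -
  have "((-1) \<cdot>\<^sub>m 1\<^sub>m 5) * ((-1) \<cdot>\<^sub>m 1\<^sub>m 5) = (1\<^sub>m 5 :: int mat)"
    by (simp add: smult_one_mat_mult smult_smult_mat)
  moreover have "Psi j (((-1) \<cdot>\<^sub>m 1\<^sub>m 5) *\<^sub>v y) = Psi j y" if "y \<in> carrier_vec 5" for y
    using that unfolding Psi_def by (simp add: smult_one_mat_mult_vec)
  ultimately show ?thesis
    unfolding carrier_O_Psi by (auto intro!: bexI[of _ "(-1) \<cdot>\<^sub>m 1\<^sub>m 5"])
qed

lemma group_O_Psi: "group (O_Psi j)"
proof (rule groupI)
  fix A B C assume "A \<in> carrier (O_Psi j)" "B \<in> carrier (O_Psi j)" "C \<in> carrier (O_Psi j)"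
  then show "A \<otimes>\<^bsub>O_Psi j\<^esub> B \<otimes>\<^bsub>O_Psi j\<^esub> C = A \<otimes>\<^bsub>O_Psi j\<^esub> (B \<otimes>\<^bsub>O_Psi j\<^esub> C)"
    unfolding mult_O_Psi using O_Psi_carrier_mat by (simp add: assoc_mult_mat[of _ 5 5 _ 5 _ 5])
next
  fix A assume A: "A \<in> carrier (O_Psi j)"
  then obtain A' where "A' \<in> carrier_mat 5 5" "A' * A = 1\<^sub>m 5" "A * A' = 1\<^sub>m 5"
    unfolding carrier_O_Psi by blast
  then show "\<exists>B\<in>carrier (O_Psi j). B \<otimes>\<^bsub>O_Psi j\<^esub> A = \<one>\<^bsub>O_Psi j\<^esub>"
    using O_Psi_inverse[OF A] unfolding mult_O_Psi one_O_Psi by blast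
qed (auto simp: mult_O_Psi one_O_Psi O_Psi_mult O_Psi_one dest: O_Psi_carrier_mat)

text \<open>Polarization: evaluate at \<open>e\<^sub>k\<close> and at \<open>e\<^sub>k + e\<^sub>l\<close>.\<close>
lemma diagonal_form_transform_gram:
  fixes P :: "int mat" and c c' :: "nat \<Rightarrow> int"
  assumes P: "P \<in> carrier_mat n n"
    and preserves: "\<And>y. y \<in> carrier_vec n \<Longrightarrow>
      (\<Sum>i<n. c' i * ((P *\<^sub>v y) $ i)^2) = (\<Sum>i<n. c i * (y $ i)^2)"
    and kl: "k < n" "l < n"
  shows "(\<Sum>i<n. c' i * P $$ (i, k) * P $$ (i, l)) = (if k = l then c k else 0)"
proof -
  let ?Q = "\<lambda>y. \<Sum>i<n. c' i * ((P *\<^sub>v y) $ i)^2"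
  have Pe: "(P *\<^sub>v unit_vec n m) $ i = P $$ (i, m)" if "m < n" "i < n" for m i
    using index_mult_mat_unit_vec[OF P that] .
  have Q_unit: "?Q (unit_vec n m) = c m" if "m < n" for m
  proof -
    have "?Q (unit_vec n m) = (\<Sum>i<n. c i * (unit_vec n m $ i)^2)"
      using preserves[of "unit_vec n m"] by simp
    also have "\<dots> = (\<Sum>i<n. if i = m then c m else 0)"
      by (intro sum.cong) (auto simp: unit_vec_def)
    finally show ?thesis
      using that by simp
  qed
  show ?thesis
  proof (cases "k = l")
    case True
    then show ?thesis
      using Q_unit[OF kl(1)] Pe[OF kl(1)] by (simp add: power2_eq_square mult.assoc)
  next
    case False
    let ?e = "unit_vec n k + unit_vec n l :: int vec"
    have Pe_sum: "(P *\<^sub>v ?e) $ i = P $$ (i, k) + P $$ (i, l)" if "i < n" for i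
      using P that Pe[OF kl(1) that] Pe[OF kl(2) that] by (simp add: mult_add_distrib_mat_vec[of P n n])
    have "?Q ?e = ?Q (unit_vec n k) + ?Q (unit_vec n l) + 2 * (\<Sum>i<n. c' i * P $$ (i, k) * P $$ (i, l))"
      using Pe kl Pe_sum
      by (simp add: power2_eq_square algebra_simps sum.distrib sum_distrib_left)
    moreover have "?Q ?e = (\<Sum>i<n. c i * (?e $ i)^2)"
      using preserves[of ?e] by simp
    moreover have "(\<Sum>i<n. c i * (?e $ i)^2) = (\<Sum>i<n. (if i = k then c k else 0) + (if i = l then c l else 0))"
      using kl False by (intro sum.cong) (auto simp: unit_vec_def)
    ultimately show ?thesis
      using Q_unit kl False by (simp add: sum.distrib)
  qed
qed

lemma O_Psi_gram:
  assumes "M \<in> carrier (O_Psi j)" "k < 5" "l < 5"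
  shows "(\<Sum>i<5. psi_coeff j i * M $$ (i, k) * M $$ (i, l)) = (if k = l then psi_coeff j k else 0)"
  using assms diagonal_form_transform_gram[of M 5 "psi_coeff j" "psi_coeff j" k l]
  unfolding carrier_O_Psi Psi_def by auto

text \<open>The Gram relations say \<open>M\<^sup>T C M = C\<close> for \<open>C = diag c\<close>, so \<open>C M\<^sup>-\<^sup>1 = M\<^sup>T C\<close>.\<close>
lemma gram_inverse_entry:
  fixes M N :: "'a :: comm_ring_1 mat"
  assumes M: "M \<in> carrier_mat n n" and N: "N \<in> carrier_mat n n" "M * N = 1\<^sub>m n"
    and gram: "\<And>k l. k < n \<Longrightarrow> l < n \<Longrightarrow>
      (\<Sum>i<n. c i * M $$ (i, k) * M $$ (i, l)) = (if k = l then c k else 0)"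
    and km: "k < n" "m < n"
  shows "c k * N $$ (k, m) = c m * M $$ (m, k)"
proof -
  have "c k * N $$ (k, m) = (\<Sum>l<n. (\<Sum>i<n. c i * M $$ (i, k) * M $$ (i, l)) * N $$ (l, m))"
    using gram km by (simp add: if_distrib[of "\<lambda>t. t * _"] cong: if_cong)
  also have "\<dots> = (\<Sum>l<n. \<Sum>i<n. c i * M $$ (i, k) * (M $$ (i, l) * N $$ (l, m)))"
    by (simp add: sum_distrib_right mult.assoc)
  also have "\<dots> = (\<Sum>i<n. c i * M $$ (i, k) * (\<Sum>l<n. M $$ (i, l) * N $$ (l, m)))"
    by (subst sum.swap) (simp add: sum_distrib_left)
  also have "\<dots> = (\<Sum>i<n. c i * M $$ (i, k) * (M * N) $$ (i, m))"
    using index_mult_mat_sum[OF M N(1) _ km(2)] by (intro sum.cong) (simp_all del: index_mult_mat)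
  also have "\<dots> = c m * M $$ (m, k)"
    using N(2) km by (simp add: if_distrib[of "\<lambda>t. _ * t"] cong: if_cong)
  finally show ?thesis .
qed

text \<open>This is what makes \<open>D M D\<^sup>-\<^sup>1\<close> integral over \<open>\<E>\<close> below.\<close>
lemma O_Psi_entry_dvd_3:
  assumes M: "M \<in> carrier (O_Psi j)" and ik: "i < 5 - j" "5 - j \<le> k" "k < 5"
  shows "3 dvd M $$ (i, k)"
proof -
  obtain N where N: "N \<in> carrier_mat 5 5" "M * N = 1\<^sub>m 5"
    using M unfolding carrier_O_Psi by blast
  have "psi_coeff j k * N $$ (k, i) = psi_coeff j i * M $$ (i, k)"
    using gram_inverse_entry[OF O_Psi_carrier_mat[OF M] N O_Psi_gram[OF M]] ik by auto
  moreover have "psi_coeff j k = 3" "psi_coeff j i = 1 \<or> psi_coeff j i = -1"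
    using ik unfolding psi_coeff_def by auto
  ultimately have "M $$ (i, k) = 3 * N $$ (k, i) \<or> M $$ (i, k) = 3 * (- N $$ (k, i))"
    by auto
  then show ?thesis
    by (metis dvd_triv_left)
qed

section \<open>Lifting \<open>O(\<Psi>\<^sub>j)\<close> into \<open>\<Gamma>\<close>\<close>

text \<open>With \<open>D = diag(lift_scale j 0, \<dots>, lift_scale j 4)\<close>, \<open>lift j M = D M D\<^sup>-\<^sup>1\<close>.\<close>
definition lift_scale :: "nat \<Rightarrow> nat \<Rightarrow> complex" where
  "lift_scale j i = (if i < 5 - j then 1 else theta)"

definition herm_sign :: "nat \<Rightarrow> complex" where
  "herm_sign i = (if i = 0 then -1 else 1)"

definition lift :: "nat \<Rightarrow> int mat \<Rightarrow> complex mat" where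
  "lift j M = mat 5 5 (\<lambda>(i, k). lift_scale j i * of_int (M $$ (i, k)) / lift_scale j k)"

lemma lift_scale_nonzero [simp]: "lift_scale j i \<noteq> 0"
  unfolding lift_scale_def using theta_nonzero by auto

lemma cnj_lift_scale: "cnj (lift_scale j i) = xi_sign j i * lift_scale j i"
  unfolding lift_scale_def xi_sign_def using cnj_theta by auto

lemma Eis_lift_scale: "lift_scale j i \<in> Eis"
  unfolding lift_scale_def using Eis_theta by auto

lemma herm_sign_lift_scale_norm:
  "j \<le> 4 \<Longrightarrow> herm_sign i * (lift_scale j i * cnj (lift_scale j i)) = of_int (psi_coeff j i)"
  unfolding herm_sign_def lift_scale_def psi_coeff_def using cnj_theta theta_times_theta by auto

lemma herm_eq_sum: "herm x y = (\<Sum>i<5. herm_sign i * x $ i * cnj (y $ i))"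
  unfolding herm_def herm_sign_def ..

lemma lift_carrier [simp]: "lift j M \<in> carrier_mat 5 5"
  and dim_lift [simp]: "dim_row (lift j M) = 5" "dim_col (lift j M) = 5"
  unfolding lift_def by simp_all

lemma index_lift:
  "i < 5 \<Longrightarrow> k < 5 \<Longrightarrow> lift j M $$ (i, k) = lift_scale j i * of_int (M $$ (i, k)) / lift_scale j k"
  unfolding lift_def by simp

lemma lift_mult:
  assumes M: "M \<in> carrier_mat 5 5" and N: "N \<in> carrier_mat 5 5"
  shows "lift j (M * N) = lift j M * lift j N"
proof (rule eq_matI)
  fix i k assume "i < dim_row (lift j M * lift j N)" "k < dim_col (lift j M * lift j N)"
  then have i: "i < 5" and k: "k < 5"
    by auto
  have "(lift j M * lift j N) $$ (i, k) = (\<Sum>l<5. lift j M $$ (i, l) * lift j N $$ (l, k))"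
    using index_mult_mat_sum[OF lift_carrier lift_carrier i k] .
  also have "\<dots> = (\<Sum>l<5. lift_scale j i * (of_int (M $$ (i, l)) * of_int (N $$ (l, k))) / lift_scale j k)"
    using i k by (intro sum.cong) (auto simp: index_lift)
  also have "\<dots> = lift_scale j i * of_int (\<Sum>l<5. M $$ (i, l) * N $$ (l, k)) / lift_scale j k"
    by (simp add: sum_divide_distrib sum_distrib_left)
  also have "\<dots> = lift j (M * N) $$ (i, k)"
    using index_mult_mat_sum[OF M N i k] i k by (simp add: index_lift)
  finally show "lift j (M * N) $$ (i, k) = (lift j M * lift j N) $$ (i, k)"
    by simp
qed auto

lemma lift_one: "lift j (1\<^sub>m 5) = 1\<^sub>m 5"
  by (rule eq_matI) (auto simp: index_lift)

lemma lift_smult_one: "lift j (c \<cdot>\<^sub>m 1\<^sub>m 5) = of_int c \<cdot>\<^sub>m 1\<^sub>m 5"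
  by (rule eq_matI) (auto simp: index_lift)

lemma lift_inj:
  assumes "M \<in> carrier_mat 5 5" "N \<in> carrier_mat 5 5" "lift j M = lift j N"
  shows "M = N"
proof (rule eq_matI)
  fix i k assume "i < dim_row N" "k < dim_col N"
  then have ik: "i < 5" "k < 5"
    using assms by auto
  then have "lift j M $$ (i, k) = lift j N $$ (i, k)"
    using assms by simp
  then show "M $$ (i, k) = N $$ (i, k)"
    using ik by (simp add: index_lift)
qed (use assms in auto)

lemma lift_Eis_mat:
  assumes M: "M \<in> carrier (O_Psi j)"
  shows "lift j M \<in> Eis_mat"
  unfolding Eis_mat_def
proof (intro CollectI conjI allI impI)
  fix i k :: nat assume i: "i < 5" and k: "k < 5"
  show "lift j M $$ (i, k) \<in> Eis"
  proof (cases "i < 5 - j \<and> 5 - j \<le> k")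
    case True
    then have "3 dvd M $$ (i, k)"
      using O_Psi_entry_dvd_3[OF M] k by blast
    then obtain n where "M $$ (i, k) = 3 * n"
      by (rule dvdE)
    moreover have "of_int (3 * n) / theta = - of_int n * theta"
      using theta_times_theta theta_nonzero by (simp add: divide_eq_eq mult.assoc)
    ultimately have "lift j M $$ (i, k) = - of_int n * theta"
      using True i k by (simp add: index_lift lift_scale_def)
    then show ?thesis
      using Eis_mult[OF Eis_uminus[OF Eis_of_int] Eis_theta] by simp
  next
    case False
    then have "lift j M $$ (i, k) = of_int (M $$ (i, k)) \<or> lift j M $$ (i, k) = theta * of_int (M $$ (i, k))"
      using i k by (auto simp: index_lift lift_scale_def)
    then show ?thesis
      using Eis_mult[OF Eis_theta Eis_of_int] by auto
  qed
qed simp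

lemma herm_mult_vec_expand:
  assumes A: "A \<in> carrier_mat 5 5" and x: "x \<in> carrier_vec 5" and y: "y \<in> carrier_vec 5"
  shows "herm (A *\<^sub>v x) (A *\<^sub>v y) =
    (\<Sum>k<5. \<Sum>l<5. x $ k * cnj (y $ l) * (\<Sum>i<5. herm_sign i * A $$ (i, k) * cnj (A $$ (i, l))))"
proof -
  have "herm (A *\<^sub>v x) (A *\<^sub>v y) =
      (\<Sum>i<5. herm_sign i * (\<Sum>k<5. A $$ (i, k) * x $ k) * cnj (\<Sum>l<5. A $$ (i, l) * y $ l))"
    unfolding herm_eq_sum using index_mult_mat_vec_sum[OF A x] index_mult_mat_vec_sum[OF A y]
    by (intro sum.cong) simp_all
  also have "\<dots> = (\<Sum>i<5. \<Sum>k<5. \<Sum>l<5. x $ k * cnj (y $ l) * (herm_sign i * A $$ (i, k) * cnj (A $$ (i, l))))"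
    by (simp add: sum_distrib_left sum_distrib_right cnj_sum mult_ac)
  also have "\<dots> = (\<Sum>k<5. \<Sum>l<5. \<Sum>i<5. x $ k * cnj (y $ l) * (herm_sign i * A $$ (i, k) * cnj (A $$ (i, l))))"
    by (subst sum.swap) (subst (2) sum.swap, rule refl)
  also have "\<dots> = (\<Sum>k<5. \<Sum>l<5. x $ k * cnj (y $ l) * (\<Sum>i<5. herm_sign i * A $$ (i, k) * cnj (A $$ (i, l))))"
    by (simp add: sum_distrib_left)
  finally show ?thesis .
qed

lemma herm_preserved_of_gram:
  assumes A: "A \<in> carrier_mat 5 5"
    and gram: "\<And>k l. k < 5 \<Longrightarrow> l < 5 \<Longrightarrow>
      (\<Sum>i<5. herm_sign i * A $$ (i, k) * cnj (A $$ (i, l))) = (if k = l then herm_sign k else 0)"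
    and x: "x \<in> carrier_vec 5" and y: "y \<in> carrier_vec 5"
  shows "herm (A *\<^sub>v x) (A *\<^sub>v y) = herm x y"
proof -
  have "herm (A *\<^sub>v x) (A *\<^sub>v y) = (\<Sum>k<5. \<Sum>l<5. if l = k then x $ k * cnj (y $ l) * herm_sign k else 0)"
    unfolding herm_mult_vec_expand[OF A x y] using gram by (intro sum.cong) auto
  also have "\<dots> = herm x y"
    unfolding herm_eq_sum by (simp add: mult_ac)
  finally show ?thesis .
qed

lemma lift_gram:
  assumes j: "j \<le> 4" and M: "M \<in> carrier (O_Psi j)" and kl: "k < 5" "l < 5"
  shows "(\<Sum>i<5. herm_sign i * lift j M $$ (i, k) * cnj (lift j M $$ (i, l))) = (if k = l then herm_sign k else 0)"
proof -
  have "(\<Sum>i<5. herm_sign i * lift j M $$ (i, k) * cnj (lift j M $$ (i, l)))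
      = (\<Sum>i<5. of_int (psi_coeff j i * M $$ (i, k) * M $$ (i, l))) / (lift_scale j k * cnj (lift_scale j l))"
    unfolding sum_divide_distrib
  proof (rule sum.cong)
    fix i assume "i \<in> {..<5::nat}"
    then have "herm_sign i * lift j M $$ (i, k) * cnj (lift j M $$ (i, l))
        = herm_sign i * (lift_scale j i * cnj (lift_scale j i)) * of_int (M $$ (i, k) * M $$ (i, l))
          / (lift_scale j k * cnj (lift_scale j l))"
      using kl by (simp add: index_lift field_simps)
    then show "herm_sign i * lift j M $$ (i, k) * cnj (lift j M $$ (i, l))
        = of_int (psi_coeff j i * M $$ (i, k) * M $$ (i, l)) / (lift_scale j k * cnj (lift_scale j l))"
      by (simp add: herm_sign_lift_scale_norm[OF j])
  qed simp
  also have "\<dots> = of_int (if k = l then psi_coeff j k else 0) / (lift_scale j k * cnj (lift_scale j l))"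
    unfolding of_int_sum[symmetric] O_Psi_gram[OF M kl] ..
  also have "\<dots> = (if k = l then herm_sign k else 0)"
    using herm_sign_lift_scale_norm[OF j, of k, symmetric] by auto
  finally show ?thesis .
qed

lemma lift_preserves_herm:
  "j \<le> 4 \<Longrightarrow> M \<in> carrier (O_Psi j) \<Longrightarrow> x \<in> carrier_vec 5 \<Longrightarrow> y \<in> carrier_vec 5 \<Longrightarrow>
    herm (lift j M *\<^sub>v x) (lift j M *\<^sub>v y) = herm x y"
  using herm_preserved_of_gram[OF lift_carrier lift_gram] by blast

lemma xi_conj_lift: "xi_conj j (lift j M) = lift j M"
proof (rule eq_matI)
  fix i k assume "i < dim_row (lift j M)" "k < dim_col (lift j M)"
  then have ik: "i < 5" "k < 5"
    by auto
  then show "xi_conj j (lift j M) $$ (i, k) = lift j M $$ (i, k)"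
    using ik by (simp add: index_xi_conj index_lift cnj_lift_scale field_simps)
qed auto

lemma lift_in_Gamma_carrier:
  assumes j: "j \<le> 4" and M: "M \<in> carrier (O_Psi j)"
  shows "lift j M \<in> Gamma_carrier"
proof -
  obtain N where N: "N \<in> carrier_mat 5 5" "N * M = 1\<^sub>m 5" "M * N = 1\<^sub>m 5"
    using M unfolding carrier_O_Psi by blast
  have "lift j N * lift j M = 1\<^sub>m 5" "lift j M * lift j N = 1\<^sub>m 5"
    using lift_mult[OF N(1) O_Psi_carrier_mat[OF M]] lift_mult[OF O_Psi_carrier_mat[OF M] N(1)] N lift_one
    by auto
  moreover have "lift j N \<in> Eis_mat"
    using lift_Eis_mat[OF O_Psi_inverse[OF M N]] .
  ultimately show ?thesis
    unfolding Gamma_carrier_def using lift_Eis_mat[OF M] lift_preserves_herm[OF j M]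
    unfolding Lambda_def by blast
qed

definition proj_lift :: "nat \<Rightarrow> int mat \<Rightarrow> complex mat set" where
  "proj_lift j M = unit_scalars #>\<^bsub>Gamma\<^esub> lift j M"

lemma unit_smult_lift_stabilizes_H4:
  assumes j: "j \<le> 4" and M: "M \<in> carrier (O_Psi j)" and u: "u \<in> Eis_units"
  shows "xi_conj j (u \<cdot>\<^sub>m lift j M) = (cnj u * cnj u) \<cdot>\<^sub>m (u \<cdot>\<^sub>m lift j M)"
    and "preserves_herm (u \<cdot>\<^sub>m lift j M)"
proof -
  have "cnj u * u = 1" "u * cnj u = 1"
    using u unfolding Eis_units_iff by (auto simp: mult.commute)
  then show "xi_conj j (u \<cdot>\<^sub>m lift j M) = (cnj u * cnj u) \<cdot>\<^sub>m (u \<cdot>\<^sub>m lift j M)"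
    by (simp add: xi_conj_smult xi_conj_lift smult_smult_mat mult.assoc)
  show "preserves_herm (u \<cdot>\<^sub>m lift j M)"
    using preserves_herm_smult[OF lift_carrier _ \<open>u * cnj u = 1\<close>] lift_preserves_herm[OF j M]
    unfolding preserves_herm_def by blast
qed

lemma proj_lift_in_H4_stabilizer:
  assumes j: "j \<le> 4" and M: "M \<in> carrier (O_Psi j)"
  shows "proj_lift j M \<in> H4_stabilizer j"
proof -
  interpret G: group Gamma
    by (rule group_Gamma)
  obtain N where N: "N \<in> carrier_mat 5 5" "N * M = 1\<^sub>m 5" "M * N = 1\<^sub>m 5"
    using M unfolding carrier_O_Psi by blast
  have N_O: "N \<in> carrier (O_Psi j)"
    using O_Psi_inverse[OF M N] .
  have "proj_lift j M \<in> carrier PGamma"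
    unfolding carrier_PGamma proj_lift_def
    using G.rcosetsI unit_scalars_subset_Gamma_carrier lift_in_Gamma_carrier[OF j M]
    unfolding carrier_Gamma by blast
  moreover have "act_line B ` H4 j = H4 j" if B: "B \<in> proj_lift j M" for B
  proof -
    obtain u where u: "u \<in> Eis_units" "B = u \<cdot>\<^sub>m lift j M"
      using unit_scalars_coset_elem[OF B[unfolded proj_lift_def]] by auto
    have "B * (cnj u \<cdot>\<^sub>m lift j N) = (u * cnj u) \<cdot>\<^sub>m (lift j M * lift j N)"
      using u(2) by (simp add: mult_smult_assoc_mat[of _ 5 5 _ 5] mult_smult_distrib[of _ 5 5 _ 5]
          smult_smult_mat mult.commute)
    also have "\<dots> = 1\<^sub>m 5"
      using u(1) lift_mult[OF O_Psi_carrier_mat[OF M] N(1)] N(3) lift_one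
      unfolding Eis_units_iff by simp
    finally show ?thesis
      using act_line_image_H4_eq unit_smult_lift_stabilizes_H4[OF j M u(1)]
        unit_smult_lift_stabilizes_H4[OF j N_O Eis_units_cnj[OF u(1)]] u(2)
      by (metis smult_carrier_mat lift_carrier)
  qed
  ultimately show ?thesis
    unfolding H4_stabilizer_def by blast
qed

lemma proj_lift_hom: "j \<le> 4 \<Longrightarrow> proj_lift j \<in> hom (O_Psi j) (PGammaR j)"
proof (rule homI)
  fix M assume "j \<le> 4" "M \<in> carrier (O_Psi j)"
  then show "proj_lift j M \<in> carrier (PGammaR j)"
    using proj_lift_in_H4_stabilizer carrier_PGammaR by auto
next
  fix M N assume j: "j \<le> 4" and M: "M \<in> carrier (O_Psi j)" and N: "N \<in> carrier (O_Psi j)"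
  interpret normal unit_scalars Gamma
    by (rule normal_unit_scalars)
  have "proj_lift j M \<otimes>\<^bsub>PGammaR j\<^esub> proj_lift j N = unit_scalars #>\<^bsub>Gamma\<^esub> (lift j M * lift j N)"
    unfolding mult_PGammaR proj_lift_def
    using rcos_sum lift_in_Gamma_carrier[OF j M] lift_in_Gamma_carrier[OF j N]
    unfolding carrier_Gamma mult_Gamma by blast
  then show "proj_lift j (M \<otimes>\<^bsub>O_Psi j\<^esub> N) = proj_lift j M \<otimes>\<^bsub>PGammaR j\<^esub> proj_lift j N"
    unfolding proj_lift_def mult_O_Psi using lift_mult O_Psi_carrier_mat M N by auto
qed

lemma proj_lift_kernel:
  assumes j: "j \<le> 4"
  shows "kernel (O_Psi j) (PGammaR j) (proj_lift j) = {1\<^sub>m 5, (-1) \<cdot>\<^sub>m 1\<^sub>m 5}"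
proof -
  interpret G: group Gamma
    by (rule group_Gamma)
  interpret S: subgroup unit_scalars Gamma
    by (rule subgroup_unit_scalars)
  have "M \<in> {1\<^sub>m 5, (-1) \<cdot>\<^sub>m 1\<^sub>m 5}"
    if M: "M \<in> carrier (O_Psi j)" "proj_lift j M = unit_scalars" for M
  proof -
    have "lift j M \<in> unit_scalars"
      using G.rcos_self[OF _ subgroup_unit_scalars] M(2) lift_in_Gamma_carrier[OF j M(1)]
      unfolding proj_lift_def carrier_Gamma by metis
    then obtain u where u: "u \<in> Eis_units" "lift j M = u \<cdot>\<^sub>m 1\<^sub>m 5"
      unfolding unit_scalars_def by auto
    have "u = of_int (M $$ (0, 0))"
      using arg_cong[OF u(2), of "\<lambda>A. A $$ (0, 0)"] by (simp add: index_lift)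
    then have "M $$ (0, 0) = 1 \<or> M $$ (0, 0) = -1"
      using Eis_units_of_int u(1) by simp
    moreover have "lift j M = lift j (M $$ (0, 0) \<cdot>\<^sub>m 1\<^sub>m 5)"
      using u(2) \<open>u = of_int (M $$ (0, 0))\<close> by (simp add: lift_smult_one)
    then have "M = M $$ (0, 0) \<cdot>\<^sub>m 1\<^sub>m 5"
      using lift_inj[OF O_Psi_carrier_mat[OF M(1)]] by simp
    ultimately show ?thesis
      by auto
  qed
  moreover have "proj_lift j (1\<^sub>m 5) = unit_scalars"
    unfolding proj_lift_def lift_one using G.coset_mult_one S.subset one_Gamma by simp
  moreover have "proj_lift j ((-1) \<cdot>\<^sub>m 1\<^sub>m 5) = unit_scalars"
    unfolding proj_lift_def lift_smult_one
    using S.rcos_const[OF group_Gamma] minus_one_in_Eis_units unfolding unit_scalars_def by force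
  ultimately show ?thesis
    unfolding kernel_def one_PGammaR using O_Psi_one O_Psi_minus_one by auto
qed

section \<open>Every element of the stabilizer is a lift\<close>

lemma square_times_power_ne_power:
  fixes d p :: int
  assumes p: "prime p" and odd: "odd (a + b)"
  shows "d * d * p ^ a \<noteq> p ^ b"
proof
  assume eq: "d * d * p ^ a = p ^ b"
  have pe: "prime_elem p" and "p \<noteq> 0"
    using p by (auto simp: prime_imp_prime_elem)
  then have "d \<noteq> 0"
    using eq by auto
  then have "multiplicity p (d * d * p ^ a) = multiplicity p d + multiplicity p d + a"
    using pe \<open>p \<noteq> 0\<close> by (simp add: prime_elem_multiplicity_mult_distrib)
  then show False
    using eq odd pe by simp
qed

lemma det_diagonal:
  "det (mat n n (\<lambda>(i, k). if i = k then f i else 0)) = (\<Prod>i<n. f i)"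
proof -
  let ?D = "mat n n (\<lambda>(i, k). if i = k then f i else 0)"
  have "det ?D = prod_list (diag_mat ?D)"
    by (rule det_upper_triangular) (auto simp: upper_triangular_def)
  also have "diag_mat ?D = map f [0..<n]"
    by (simp add: diag_mat_def)
  finally show ?thesis
    using prod.distinct_set_conv_list[OF distinct_upt, of f 0 n] by (simp add: lessThan_atLeast0)
qed

text \<open>Taking determinants in \<open>P\<^sup>T diag(c') P = diag(c)\<close>.\<close>
lemma det_square_of_gram:
  fixes P :: "'a :: comm_ring_1 mat"
  assumes P: "P \<in> carrier_mat n n"
    and gram: "\<And>k l. k < n \<Longrightarrow> l < n \<Longrightarrow>
      (\<Sum>i<n. c' i * P $$ (i, k) * P $$ (i, l)) = (if k = l then c k else 0)"
  shows "det P * det P * (\<Prod>i<n. c' i) = (\<Prod>i<n. c i)"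
proof -
  define D' where "D' = mat n n (\<lambda>(i, k). if i = k then c' i else 0)"
  define D where "D = mat n n (\<lambda>(i, k). if i = k then c i else 0)"
  have carriers: "D' \<in> carrier_mat n n" "transpose_mat P \<in> carrier_mat n n"
    using P unfolding D'_def by auto
  have "transpose_mat P * D' * P = D"
  proof (rule eq_matI)
    fix k l assume "k < dim_row D" "l < dim_col D"
    then have kl: "k < n" "l < n"
      unfolding D_def by auto
    have "(transpose_mat P * D') $$ (k, m) = c' m * P $$ (m, k)" if "m < n" for m
      using index_mult_mat_sum[OF carriers(2,1) kl(1) that] that kl P
      by (simp add: D'_def if_distrib[of "\<lambda>t. _ * t"] cong: if_cong)
    then have "(transpose_mat P * D' * P) $$ (k, l) = (\<Sum>m<n. c' m * P $$ (m, k) * P $$ (m, l))"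
      using index_mult_mat_sum[OF mult_carrier_mat[OF carriers(2,1)] P kl] by simp
    then show "(transpose_mat P * D' * P) $$ (k, l) = D $$ (k, l)"
      using gram[OF kl] kl by (simp add: D_def)
  qed (use P in \<open>auto simp: D_def D'_def\<close>)
  then have "det D = det P * det D' * det P"
    using det_mult[OF mult_carrier_mat[OF carriers(2,1)] P] det_mult[OF carriers(2,1)] det_transpose[OF P]
    by simp
  then show ?thesis
    unfolding D_def D'_def det_diagonal by (simp add: mult_ac)
qed

lemma int_mat_of_entries:
  assumes "\<And>i k. i < n \<Longrightarrow> k < m \<Longrightarrow> \<exists>z. f i k = (of_int z :: 'a :: ring_1)"
  shows "\<exists>P \<in> carrier_mat n m. \<forall>i<n. \<forall>k<m. f i k = of_int (P $$ (i, k))"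
proof -
  define P where "P = mat n m (\<lambda>(i, k). SOME z. f i k = (of_int z :: 'a))"
  have "\<forall>i<n. \<forall>k<m. f i k = of_int (P $$ (i, k))"
    using assms by (auto simp: P_def intro: someI_ex)
  moreover have "P \<in> carrier_mat n m"
    by (simp add: P_def)
  ultimately show ?thesis
    by blast
qed

text \<open>The hypothesis reads \<open>A D = diag(w) P\<close>; evaluate \<open>h(Az, Az) = h(z, z)\<close> at \<open>z = D y \<in> \<Lambda>\<close>.\<close>
lemma herm_of_scaled_int_mat:
  fixes P :: "int mat" and y :: "int vec"
  assumes A: "A \<in> Gamma_carrier" and P: "P \<in> carrier_mat 5 5"
    and scaled: "\<And>i k. i < 5 \<Longrightarrow> k < 5 \<Longrightarrow> A $$ (i, k) * lift_scale j k = w i * of_int (P $$ (i, k))"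
    and y: "y \<in> carrier_vec 5"
  shows "(\<Sum>i<5. herm_sign i * (w i * cnj (w i)) * of_int (((P *\<^sub>v y) $ i)^2)) =
         (\<Sum>i<5. herm_sign i * (lift_scale j i * cnj (lift_scale j i)) * of_int ((y $ i)^2))"
proof -
  define z where "z = vec 5 (\<lambda>k. lift_scale j k * of_int (y $ k))"
  have z: "z \<in> carrier_vec 5" "z \<in> Lambda"
    unfolding Lambda_def z_def using Eis_mult[OF Eis_lift_scale Eis_of_int] by auto
  have Az: "(A *\<^sub>v z) $ i = w i * of_int ((P *\<^sub>v y) $ i)" if i: "i < 5" for i
  proof -
    have "(A *\<^sub>v z) $ i = (\<Sum>k<5. A $$ (i, k) * (lift_scale j k * of_int (y $ k)))"
      using index_mult_mat_vec_sum[OF Gamma_carrier_carrier_mat[OF A] z(1) i] by (simp add: z_def)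
    also have "\<dots> = (\<Sum>k<5. w i * (of_int (P $$ (i, k)) * of_int (y $ k)))"
      using scaled i by (intro sum.cong) (simp_all flip: mult.assoc)
    also have "\<dots> = w i * of_int ((P *\<^sub>v y) $ i)"
      using index_mult_mat_vec_sum[OF P y i] by (simp add: sum_distrib_left)
    finally show ?thesis .
  qed
  have "herm (A *\<^sub>v z) (A *\<^sub>v z) = (\<Sum>i<5. herm_sign i * (w i * cnj (w i)) * of_int (((P *\<^sub>v y) $ i)^2))"
    unfolding herm_eq_sum using Az by (intro sum.cong) (simp_all add: power2_eq_square mult_ac)
  moreover have "herm z z = (\<Sum>i<5. herm_sign i * (lift_scale j i * cnj (lift_scale j i)) * of_int ((y $ i)^2))"
    unfolding herm_eq_sum z_def by (intro sum.cong) (simp_all add: power2_eq_square mult_ac)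
  ultimately show ?thesis
    using Gamma_carrier_herm[OF A z(2) z(2)] by simp
qed

lemma Eis_xi_fixed_entry_int:
  assumes a: "a \<in> Eis" and fixed: "xi_sign j i * xi_sign j k * cnj a = a"
  shows "\<exists>z. a * lift_scale j k / lift_scale j i = of_int z"
proof (cases "i < 5 - j \<longleftrightarrow> k < 5 - j")
  case True
  then have "cnj a = a"
    using fixed by (auto simp: xi_sign_def)
  then obtain z where "a = of_int z"
    using Eis_real_imp_int[OF a] by blast
  then show ?thesis
    using True by (auto simp: lift_scale_def)
next
  case False
  then have "cnj a = - a"
    using fixed by (auto simp: xi_sign_def minus_equation_iff)
  then obtain z where z: "a = of_int z * theta"
    using Eis_imaginary_imp_int_theta[OF a] by blast
  show ?thesis
  proof (cases "i < 5 - j")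
    case True
    then have "a * lift_scale j k / lift_scale j i = of_int (-3 * z)"
      using False z theta_times_theta by (auto simp: lift_scale_def mult.assoc)
    then show ?thesis
      by blast
  qed (use False z in \<open>auto simp: lift_scale_def\<close>)
qed

lemma xi_conj_fixed_imp_lift:
  assumes A: "A \<in> Eis_mat" and fixed: "xi_conj j A = A"
  shows "\<exists>M \<in> carrier_mat 5 5. lift j M = A"
proof -
  have A_carrier: "A \<in> carrier_mat 5 5"
    using A by (rule Eis_mat_carrier)
  have "\<exists>z. A $$ (i, k) * lift_scale j k / lift_scale j i = of_int z" if ik: "i < 5" "k < 5" for i k
    using Eis_xi_fixed_entry_int arg_cong[OF fixed, of "\<lambda>B. B $$ (i, k)"] A ik
    unfolding Eis_mat_def by (simp add: index_xi_conj)
  then obtain M where M: "M \<in> carrier_mat 5 5"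
    "\<forall>i<5. \<forall>k<5. A $$ (i, k) * lift_scale j k / lift_scale j i = of_int (M $$ (i, k))"
    using int_mat_of_entries[of 5 5 "\<lambda>i k. A $$ (i, k) * lift_scale j k / lift_scale j i"] by blast
  have "lift j M = A"
  proof (rule eq_matI)
    fix i k assume "i < dim_row A" "k < dim_col A"
    then have "i < 5" "k < 5"
      using A_carrier by auto
    then show "lift j M $$ (i, k) = A $$ (i, k)"
      using M(2) by (simp add: index_lift field_simps)
  qed (use A_carrier in auto)
  then show ?thesis
    using M(1) by blast
qed

lemma prod_psi_coeff: "j \<le> 4 \<Longrightarrow> (\<Prod>i<5. psi_coeff j i) = - (3 ^ j)"
proof -
  assume "j \<le> 4"
  then have "j \<in> {0, 1, 2, 3, 4}"
    by auto
  then show ?thesis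
    by (auto simp: psi_coeff_def numeral_eq_Suc)
qed

lemma xi_conj_fixed_Gamma_imp_lift_O_Psi:
  assumes j: "j \<le> 4" and A: "A \<in> Gamma_carrier" and fixed: "xi_conj j A = A"
  shows "\<exists>M \<in> carrier (O_Psi j). lift j M = A"
proof -
  obtain A' where A': "A' \<in> Eis_mat" "A' * A = 1\<^sub>m 5" "A * A' = 1\<^sub>m 5"
    using A unfolding Gamma_carrier_def by blast
  have A_Eis: "A \<in> Eis_mat" and A_carrier: "A \<in> carrier_mat 5 5"
    using A unfolding Gamma_carrier_def Eis_mat_def by auto
  have "xi_conj j A' = A'"
    using xi_conj_fixed_inverse[OF A_carrier Eis_mat_carrier[OF A'(1)] A'(2,3) fixed] .
  then obtain M' where M': "M' \<in> carrier_mat 5 5" "lift j M' = A'"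
    using xi_conj_fixed_imp_lift[OF A'(1)] by blast
  obtain M where M: "M \<in> carrier_mat 5 5" "lift j M = A"
    using xi_conj_fixed_imp_lift[OF A_Eis fixed] by blast
  have "lift j (M' * M) = lift j (1\<^sub>m 5)" "lift j (M * M') = lift j (1\<^sub>m 5)"
    using lift_mult M M' A' lift_one by auto
  then have inverse: "M' * M = 1\<^sub>m 5" "M * M' = 1\<^sub>m 5"
    using lift_inj[of "M' * M"] lift_inj[of "M * M'"] M(1) M'(1) by auto
  have "Psi j (M *\<^sub>v y) = Psi j y" if y: "y \<in> carrier_vec 5" for y
  proof -
    have "A $$ (i, k) * lift_scale j k = lift_scale j i * of_int (M $$ (i, k))" if "i < 5" "k < 5" for i k
      using that M(2)[symmetric] by (simp add: index_lift)
    then have "(of_int (Psi j (M *\<^sub>v y)) :: complex) = of_int (Psi j y)"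
      using herm_of_scaled_int_mat[OF A M(1), of j "lift_scale j", OF _ y] herm_sign_lift_scale_norm[OF j]
      unfolding Psi_def by simp
    then show ?thesis
      by (simp only: of_int_eq_iff)
  qed
  then have "M \<in> carrier (O_Psi j)"
    unfolding carrier_O_Psi using M(1) M'(1) inverse by blast
  then show ?thesis
    using M(2) by blast
qed

definition alt_scale :: "nat \<Rightarrow> nat \<Rightarrow> complex" where
  "alt_scale j i = (if i < 5 - j then theta else 1)"

definition alt_coeff :: "nat \<Rightarrow> nat \<Rightarrow> int" where
  "alt_coeff j i = (if i = 0 then -3 else if i < 5 - j then 3 else 1)"

lemma herm_sign_alt_scale_norm:
  "j \<le> 4 \<Longrightarrow> herm_sign i * (alt_scale j i * cnj (alt_scale j i)) = of_int (alt_coeff j i)"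
  unfolding herm_sign_def alt_scale_def alt_coeff_def using cnj_theta theta_times_theta by auto

lemma prod_alt_coeff: "j \<le> 4 \<Longrightarrow> (\<Prod>i<5. alt_coeff j i) = - (3 ^ (5 - j))"
proof -
  assume "j \<le> 4"
  then have "j \<in> {0, 1, 2, 3, 4}"
    by auto
  then show ?thesis
    by (auto simp: alt_coeff_def numeral_eq_Suc)
qed

lemma Eis_xi_antifixed_entry_int:
  assumes a: "a \<in> Eis" and antifixed: "xi_sign j i * xi_sign j k * cnj a = - a"
  shows "\<exists>z. a * lift_scale j k / alt_scale j i = of_int z"
proof (cases "i < 5 - j \<longleftrightarrow> k < 5 - j")
  case True
  then have "cnj a = - a"
    using antifixed by (auto simp: xi_sign_def)
  then obtain z where z: "a = of_int z * theta"
    using Eis_imaginary_imp_int_theta[OF a] by blast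
  show ?thesis
  proof (cases "i < 5 - j")
    case False
    then have "a * lift_scale j k / alt_scale j i = of_int (-3 * z)"
      using True z theta_times_theta by (auto simp: lift_scale_def alt_scale_def mult.assoc)
    then show ?thesis
      by blast
  qed (use True z in \<open>auto simp: lift_scale_def alt_scale_def\<close>)
next
  case False
  then have "cnj a = a"
    using antifixed by (auto simp: xi_sign_def minus_equation_iff)
  then obtain z where "a = of_int z"
    using Eis_real_imp_int[OF a] by blast
  then show ?thesis
    using False by (auto simp: lift_scale_def alt_scale_def)
qed

lemma xi_conj_antifixed_imp_scaled_int:
  assumes A: "A \<in> Eis_mat" and antifixed: "xi_conj j A = - A"
  shows "\<exists>P \<in> carrier_mat 5 5. \<forall>i<5. \<forall>k<5. A $$ (i, k) * lift_scale j k = alt_scale j i * of_int (P $$ (i, k))"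
proof -
  have "\<exists>z. A $$ (i, k) * lift_scale j k / alt_scale j i = of_int z" if ik: "i < 5" "k < 5" for i k
    using Eis_xi_antifixed_entry_int arg_cong[OF antifixed, of "\<lambda>B. B $$ (i, k)"] A ik
      carrier_matD[OF Eis_mat_carrier[OF A]]
    unfolding Eis_mat_def by (simp add: index_xi_conj)
  then obtain P where P: "P \<in> carrier_mat 5 5"
    "\<forall>i<5. \<forall>k<5. A $$ (i, k) * lift_scale j k / alt_scale j i = of_int (P $$ (i, k))"
    using int_mat_of_entries[of 5 5 "\<lambda>i k. A $$ (i, k) * lift_scale j k / alt_scale j i"] by blast
  moreover have "alt_scale j i \<noteq> 0" for i
    unfolding alt_scale_def using theta_nonzero by auto
  ultimately show ?thesis
    by (auto simp: field_simps)
qed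

lemma xi_conj_Gamma_ne_uminus:
  assumes j: "j \<le> 4" and A: "A \<in> Gamma_carrier"
  shows "xi_conj j A \<noteq> - A"
proof
  assume antifixed: "xi_conj j A = - A"
  obtain P where P: "P \<in> carrier_mat 5 5"
    "\<And>i k. i < 5 \<Longrightarrow> k < 5 \<Longrightarrow> A $$ (i, k) * lift_scale j k = alt_scale j i * of_int (P $$ (i, k))"
    using xi_conj_antifixed_imp_scaled_int[OF _ antifixed] A unfolding Gamma_carrier_def by blast
  have "(\<Sum>i<5. alt_coeff j i * ((P *\<^sub>v y) $ i)^2) = (\<Sum>i<5. psi_coeff j i * (y $ i)^2)"
    if y: "y \<in> carrier_vec 5" for y
  proof -
    have "(of_int (\<Sum>i<5. alt_coeff j i * ((P *\<^sub>v y) $ i)^2) :: complex)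
        = of_int (\<Sum>i<5. psi_coeff j i * (y $ i)^2)"
      using herm_of_scaled_int_mat[OF A P(1), of j "alt_scale j", OF P(2) y]
        herm_sign_alt_scale_norm[OF j] herm_sign_lift_scale_norm[OF j] by simp
    then show ?thesis
      by (simp only: of_int_eq_iff)
  qed
  then have "det P * det P * (\<Prod>i<5. alt_coeff j i) = (\<Prod>i<5. psi_coeff j i)"
    using det_square_of_gram[OF P(1)] diagonal_form_transform_gram[OF P(1)] by blast
  then have "det P * det P * 3 ^ (5 - j) = 3 ^ j"
    using prod_alt_coeff[OF j] prod_psi_coeff[OF j] by simp
  moreover have "odd (5 - j + j)"
    using j by simp
  ultimately show False
    using square_times_power_ne_power[of 3] by auto
qed

lemma stabilizer_maps_real_vectors_to_eigenvectors:
  assumes g: "g \<in> carrier_mat 5 5" and stab: "act_line g ` H4 j = H4 j"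
    and v: "v \<in> carrier_vec 5" "xi j v = v" "Re (herm v v) < 0"
  shows "\<exists>lam. xi_conj j g *\<^sub>v v = lam \<cdot>\<^sub>v (g *\<^sub>v v)"
proof -
  have "cline v \<in> H4 j"
    unfolding H4_iff using v by (intro exI[of _ v]) (auto intro!: exI[of _ 1])
  then have "cline (g *\<^sub>v v) \<in> H4 j"
    using stab act_line_cline[OF g v(1)] by blast
  then obtain w e where w: "cline (g *\<^sub>v v) = cline w" "w \<in> carrier_vec 5" "xi j w = e \<cdot>\<^sub>v w"
    unfolding H4_iff by blast
  have "g *\<^sub>v v \<in> cline w"
    using self_in_cline[OF mult_mat_vec_carrier[OF g v(1)]] w(1) by simp
  then obtain c where c: "g *\<^sub>v v = c \<cdot>\<^sub>v w"
    unfolding cline_def by auto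
  define lam where "lam = (if c = 0 then 0 else cnj c * e / c)"
  have "xi j (g *\<^sub>v v) = (cnj c * e) \<cdot>\<^sub>v w"
    using c xi_smult[OF w(2)] w(3) by (simp add: smult_smult_assoc)
  also have "\<dots> = lam \<cdot>\<^sub>v (g *\<^sub>v v)"
    using c by (simp add: lam_def smult_smult_assoc)
  finally show ?thesis
    using xi_conj_mult_vec[OF g v(1)] v(2) by auto
qed

text \<open>Together with \<open>e\<^sub>0\<close>, the \<open>\<xi>\<^sub>j\<close>-fixed negative vectors \<open>2e\<^sub>0 \<plusminus> lift_scale j i \<cdot> e\<^sub>i\<close>
  (of norm \<open>-4 + |lift_scale j i|\<^sup>2 \<in> {-3, -1}\<close>) are enough to force
  \<open>\<xi>\<^sub>j g \<xi>\<^sub>j\<close> to be a multiple of \<open>g\<close>.\<close>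
definition test_vec :: "nat \<Rightarrow> nat \<Rightarrow> complex \<Rightarrow> complex vec" where
  "test_vec j i s = vec 5 (\<lambda>k. if k = 0 then 2 else if k = i then s * lift_scale j i else 0)"

lemma test_vec_carrier: "test_vec j i s \<in> carrier_vec 5"
  unfolding test_vec_def by simp

lemma sum_two_entries:
  fixes i :: nat and f :: "nat \<Rightarrow> complex"
  assumes "0 < i" "i < 5"
  shows "(\<Sum>l<5. (if l = 0 then a else if l = i then b else 0) * f l) = a * f 0 + b * f i"
proof -
  have "(\<Sum>l<5. (if l = 0 then a else if l = i then b else 0) * f l)
     = (\<Sum>l<5::nat. (if l = 0 then a * f 0 else 0) + (if l = i then b * f i else 0))"
    using assms by (intro sum.cong) auto
  also have "\<dots> = a * f 0 + b * f i"
    using assms by (simp add: sum.distrib)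
  finally show ?thesis .
qed

lemma mult_test_vec:
  assumes A: "A \<in> carrier_mat 5 5" and i: "0 < i" "i < 5" and k: "k < 5"
  shows "(A *\<^sub>v test_vec j i s) $ k = 2 * A $$ (k, 0) + s * lift_scale j i * A $$ (k, i)"
proof -
  have "(A *\<^sub>v test_vec j i s) $ k = (\<Sum>l<5. (if l = 0 then 2 else if l = i then s * lift_scale j i else 0) * A $$ (k, l))"
    using index_mult_mat_vec_sum[OF A test_vec_carrier k] by (simp add: test_vec_def mult.commute)
  then show ?thesis
    using sum_two_entries[OF i] by simp
qed

lemma xi_test_vec:
  assumes j: "j \<le> 4" and s: "s = 1 \<or> s = -1"
  shows "xi j (test_vec j i s) = test_vec j i s"
proof (rule eq_vecI)
  fix k assume "k < dim_vec (test_vec j i s)"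
  then have k: "k < 5"
    by (simp add: test_vec_def)
  have "xi_sign j k * cnj (s * lift_scale j k) = s * lift_scale j k"
    using s by (auto simp: cnj_lift_scale mult.assoc[symmetric])
  then show "xi j (test_vec j i s) $ k = test_vec j i s $ k"
    using k xi_sign_0[OF j] by (auto simp: index_xi test_vec_def)
qed (simp add: test_vec_def)

lemma herm_test_vec_negative:
  assumes i: "0 < i" "i < 5" and s: "s = 1 \<or> s = -1"
  shows "Re (herm (test_vec j i s) (test_vec j i s)) < 0"
proof -
  have "herm (test_vec j i s) (test_vec j i s)
      = (\<Sum>l<5. (if l = 0 then -4 else if l = i then lift_scale j i * cnj (lift_scale j i) else 0) * 1)"
    unfolding herm_eq_sum using i s by (intro sum.cong) (auto simp: test_vec_def herm_sign_def)
  also have "\<dots> = -4 + lift_scale j i * cnj (lift_scale j i)"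
    using sum_two_entries[OF i, of _ _ "\<lambda>_. 1"] by simp
  finally have "herm (test_vec j i s) (test_vec j i s) = -4 + lift_scale j i * cnj (lift_scale j i)" .
  moreover have "lift_scale j i * cnj (lift_scale j i) = 1 \<or> lift_scale j i * cnj (lift_scale j i) = 3"
    unfolding lift_scale_def using cnj_theta theta_times_theta by auto
  ultimately have "herm (test_vec j i s) (test_vec j i s) = -3 \<or> herm (test_vec j i s) (test_vec j i s) = -1"
    by auto
  then show ?thesis
    by auto
qed

lemma xi_unit_vec_0: "j \<le> 4 \<Longrightarrow> xi j (unit_vec 5 0) = unit_vec 5 0"
  by (rule eq_vecI) (auto simp: index_xi xi_sign_0)

lemma herm_unit_vec_0: "herm (unit_vec 5 0) (unit_vec 5 0) = -1"
  unfolding herm_eq_sum by (simp add: herm_sign_def lessThan_nat_numeral)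

lemma columns_independent:
  fixes g N :: "complex mat"
  assumes g: "g \<in> carrier_mat n n" and N: "N \<in> carrier_mat n n" "N * g = 1\<^sub>m n"
    and ab: "a < n" "b < n" "a \<noteq> b"
    and zero: "\<And>k. k < n \<Longrightarrow> g $$ (k, a) * p + g $$ (k, b) * q = 0"
  shows "p = 0 \<and> q = 0"
proof -
  have "(N * g) $$ (m, a) * p + (N * g) $$ (m, b) * q = 0" if m: "m < n" for m
  proof -
    have "(N * g) $$ (m, a) * p + (N * g) $$ (m, b) * q = (\<Sum>k<n. N $$ (m, k) * (g $$ (k, a) * p + g $$ (k, b) * q))"
      using index_mult_mat_sum[OF N(1) g m ab(1)] index_mult_mat_sum[OF N(1) g m ab(2)]
      by (simp add: sum_distrib_left sum_distrib_right sum.distrib algebra_simps)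
    then show ?thesis
      using zero by simp
  qed
  from this[OF ab(1)] this[OF ab(2)] show ?thesis
    using N(2) ab by simp
qed

text \<open>If \<open>K\<close> agrees with \<open>\<mu> g\<close> on \<open>e\<^sub>0\<close> and maps \<open>2e\<^sub>0 \<plusminus> d e\<^sub>i\<close> to multiples \<open>a, b\<close> of their
  images under the invertible \<open>g\<close>, then \<open>4\<mu> = 2a + 2b\<close> and \<open>d(a - b) = 0\<close> by independence
  of the columns \<open>0, i\<close> of \<open>g\<close>; hence \<open>a = b = \<mu>\<close>.\<close>
lemma column_eq_smult_of_eigenvectors:
  fixes K g N :: "complex mat"
  assumes g: "g \<in> carrier_mat n n" and N: "N \<in> carrier_mat n n" "N * g = 1\<^sub>m n"
    and i: "0 < i" "i < n" and d: "d \<noteq> 0"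
    and col0: "\<And>k. k < n \<Longrightarrow> K $$ (k, 0) = \<mu> * g $$ (k, 0)"
    and plus: "\<And>k. k < n \<Longrightarrow> 2 * K $$ (k, 0) + d * K $$ (k, i) = a * (2 * g $$ (k, 0) + d * g $$ (k, i))"
    and minus: "\<And>k. k < n \<Longrightarrow> 2 * K $$ (k, 0) - d * K $$ (k, i) = b * (2 * g $$ (k, 0) - d * g $$ (k, i))"
    and k: "k < n"
  shows "K $$ (k, i) = \<mu> * g $$ (k, i)"
proof -
  have "g $$ (m, 0) * (4 * \<mu> - 2 * a - 2 * b) + g $$ (m, i) * (- (d * (a - b))) = 0" if m: "m < n" for m
  proof -
    have "g $$ (m, 0) * (4 * \<mu> - 2 * a - 2 * b) + g $$ (m, i) * (- (d * (a - b)))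
        = 4 * (\<mu> * g $$ (m, 0)) - (a * (2 * g $$ (m, 0) + d * g $$ (m, i)) + b * (2 * g $$ (m, 0) - d * g $$ (m, i)))"
      by (simp add: algebra_simps)
    also have "\<dots> = 4 * K $$ (m, 0) - ((2 * K $$ (m, 0) + d * K $$ (m, i)) + (2 * K $$ (m, 0) - d * K $$ (m, i)))"
      using plus[OF m] minus[OF m] col0[OF m] by simp
    also have "\<dots> = 0"
      by (simp add: algebra_simps)
    finally show ?thesis .
  qed
  then have "4 * \<mu> - 2 * a - 2 * b = 0" "- (d * (a - b)) = 0"
    using columns_independent[OF g N _ i(2)] i by blast+
  then have "4 * \<mu> = 4 * a"
    using d by (simp add: algebra_simps)
  then have "a = \<mu>"
    by simp
  then have "d * K $$ (k, i) = d * (\<mu> * g $$ (k, i))"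
    using plus[OF k] col0[OF k] by (simp add: algebra_simps)
  then show ?thesis
    using d by simp
qed

lemma xi_conj_eq_smult_of_eigenvectors:
  assumes j: "j \<le> 4" and g: "g \<in> carrier_mat 5 5" and N: "N \<in> carrier_mat 5 5" "N * g = 1\<^sub>m 5"
    and eigen: "\<And>v. v \<in> carrier_vec 5 \<Longrightarrow> xi j v = v \<Longrightarrow> Re (herm v v) < 0 \<Longrightarrow>
       \<exists>lam. xi_conj j g *\<^sub>v v = lam \<cdot>\<^sub>v (g *\<^sub>v v)"
  shows "\<exists>\<mu>. xi_conj j g = \<mu> \<cdot>\<^sub>m g"
proof -
  let ?K = "xi_conj j g"
  have eigen_entries: "\<exists>lam. \<forall>k<5. (?K *\<^sub>v v) $ k = lam * (g *\<^sub>v v) $ k"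
    if "v \<in> carrier_vec 5" "xi j v = v" "Re (herm v v) < 0" for v
    using eigen[OF that] g by (metis index_smult_vec(1) dim_mult_mat_vec carrier_matD(1))
  obtain \<mu> where "\<forall>k<5. (?K *\<^sub>v unit_vec 5 0) $ k = \<mu> * (g *\<^sub>v unit_vec 5 0) $ k"
    using eigen_entries[OF _ xi_unit_vec_0[OF j]] herm_unit_vec_0 by auto
  then have col0: "?K $$ (k, 0) = \<mu> * g $$ (k, 0)" if "k < 5" for k
    using that index_mult_mat_unit_vec[OF xi_conj_carrier] index_mult_mat_unit_vec[OF g] by simp
  have "?K $$ (k, i) = \<mu> * g $$ (k, i)" if i: "0 < i" "i < 5" and k: "k < 5" for i k
  proof -
    obtain a where "\<forall>k<5. (?K *\<^sub>v test_vec j i 1) $ k = a * (g *\<^sub>v test_vec j i 1) $ k"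
      using eigen_entries[OF test_vec_carrier xi_test_vec[OF j] herm_test_vec_negative[OF i]] by auto
    then have plus: "2 * ?K $$ (m, 0) + lift_scale j i * ?K $$ (m, i)
        = a * (2 * g $$ (m, 0) + lift_scale j i * g $$ (m, i))" if "m < 5" for m
      using that mult_test_vec[OF xi_conj_carrier i] mult_test_vec[OF g i] by simp
    obtain b where "\<forall>k<5. (?K *\<^sub>v test_vec j i (-1)) $ k = b * (g *\<^sub>v test_vec j i (-1)) $ k"
      using eigen_entries[OF test_vec_carrier xi_test_vec[OF j] herm_test_vec_negative[OF i]] by auto
    then have minus: "2 * ?K $$ (m, 0) - lift_scale j i * ?K $$ (m, i)
        = b * (2 * g $$ (m, 0) - lift_scale j i * g $$ (m, i))" if "m < 5" for m
      using that mult_test_vec[OF xi_conj_carrier i] mult_test_vec[OF g i] by simp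
    show ?thesis
      using column_eq_smult_of_eigenvectors[OF g N i lift_scale_nonzero col0 plus minus k] .
  qed
  then have "?K = \<mu> \<cdot>\<^sub>m g"
    using col0 g by (intro eq_matI) (auto, metis neq0_conv)
  then show ?thesis
    by blast
qed

lemma xi_conj_smult_factor_unit:
  assumes g: "g \<in> Eis_mat" and N: "N \<in> Eis_mat" "N * g = 1\<^sub>m 5" "g * N = 1\<^sub>m 5"
    and conj: "xi_conj j g = \<mu> \<cdot>\<^sub>m g"
  shows "\<mu> \<in> Eis_units"
proof -
  have carriers: "g \<in> carrier_mat 5 5" "N \<in> carrier_mat 5 5"
    using g N(1) Eis_mat_carrier by auto
  have "xi_conj j g * N = \<mu> \<cdot>\<^sub>m 1\<^sub>m 5"
    using conj carriers N(3) by (simp add: mult_smult_assoc_mat[of _ 5 5 _ 5])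
  moreover have "(xi_conj j g * N) $$ (0, 0) \<in> Eis"
    using Eis_mat_mult[OF xi_conj_Eis_mat[OF g] N(1), of j] unfolding Eis_mat_def by simp
  ultimately have \<mu>_Eis: "\<mu> \<in> Eis"
    by simp
  obtain k where k: "k < 5" "g $$ (k, 0) \<noteq> 0"
  proof (rule ccontr)
    assume "\<not> thesis"
    then have "\<forall>k<5. g $$ (k, 0) = 0"
      using that by blast
    then have "(N * g) $$ (0, 0) = 0"
      using index_mult_mat_sum[OF carriers(2,1), of 0 0] by simp
    then show False
      using N(2) by simp
  qed
  have entry: "xi_sign j k * xi_sign j 0 * cnj (g $$ (k, 0)) = \<mu> * g $$ (k, 0)"
    using arg_cong[OF conj, of "\<lambda>A. A $$ (k, 0)"] k(1) carriers(1) by (simp add: index_xi_conj)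
  have "g $$ (k, 0) * cnj (g $$ (k, 0))
      = (xi_sign j k * xi_sign j 0 * cnj (g $$ (k, 0))) * cnj (xi_sign j k * xi_sign j 0 * cnj (g $$ (k, 0)))"
    by (simp add: mult_ac)
  also have "\<dots> = (\<mu> * cnj \<mu>) * (g $$ (k, 0) * cnj (g $$ (k, 0)))"
    unfolding entry by (simp add: mult_ac)
  finally have "(\<mu> * cnj \<mu> - 1) * (g $$ (k, 0) * cnj (g $$ (k, 0))) = 0"
    by (simp add: algebra_simps)
  then have "\<mu> * cnj \<mu> = 1"
    using k(2) by simp
  then show ?thesis
    unfolding Eis_units_iff using \<mu>_Eis by blast
qed

lemma H4_stabilizer_rep_xi_conj:
  assumes j: "j \<le> 4" and g: "g \<in> Gamma_carrier" and stab: "act_line g ` H4 j = H4 j"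
  shows "\<exists>\<mu> \<in> Eis_units. xi_conj j g = \<mu> \<cdot>\<^sub>m g"
proof -
  obtain N where N: "N \<in> Eis_mat" "N * g = 1\<^sub>m 5" "g * N = 1\<^sub>m 5"
    using g unfolding Gamma_carrier_def by auto
  have g_carrier: "g \<in> carrier_mat 5 5" and g_Eis: "g \<in> Eis_mat"
    using g unfolding Gamma_carrier_def Eis_mat_def by auto
  obtain \<mu> where "xi_conj j g = \<mu> \<cdot>\<^sub>m g"
    using xi_conj_eq_smult_of_eigenvectors[OF j g_carrier Eis_mat_carrier[OF N(1)] N(2)]
      stabilizer_maps_real_vectors_to_eigenvectors[OF g_carrier stab] by blast
  then show ?thesis
    using xi_conj_smult_factor_unit[OF g_Eis N] by blast
qed

lemma xi_conj_rescale_sign: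
  assumes g: "g \<in> carrier_mat 5 5" and \<mu>: "\<mu> \<in> Eis_units" "xi_conj j g = \<mu> \<cdot>\<^sub>m g"
  shows "\<exists>t \<in> Eis_units. xi_conj j (t \<cdot>\<^sub>m g) = t \<cdot>\<^sub>m g \<or> xi_conj j (t \<cdot>\<^sub>m g) = - (t \<cdot>\<^sub>m g)"
proof -
  obtain t where t: "t \<in> Eis_units" "t * t = \<mu> \<or> t * t = - \<mu>"
    using Eis_units_square_up_to_sign[OF \<mu>(1)] by blast
  have "cnj t * t = 1"
    using t(1) unfolding Eis_units_iff by (simp add: mult.commute)
  then have "cnj t * \<mu> = t \<or> cnj t * \<mu> = - t"
    using t(2) by (metis mult.assoc mult_1 mult_minus_right minus_minus)
  moreover have "xi_conj j (t \<cdot>\<^sub>m g) = (cnj t * \<mu>) \<cdot>\<^sub>m g"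
    using xi_conj_smult[OF g] \<mu>(2) by (simp add: smult_smult_mat)
  moreover have "(- t) \<cdot>\<^sub>m g = - (t \<cdot>\<^sub>m g)"
    by (rule eq_matI) auto
  ultimately show ?thesis
    using t(1) by auto
qed

lemma H4_stabilizer_has_xi_fixed_rep:
  assumes j: "j \<le> 4" and C: "C \<in> H4_stabilizer j"
  shows "\<exists>g \<in> Gamma_carrier. C = unit_scalars #>\<^bsub>Gamma\<^esub> g \<and> xi_conj j g = g"
proof -
  interpret G: group Gamma
    by (rule group_Gamma)
  obtain g where g: "g \<in> Gamma_carrier" "C = unit_scalars #>\<^bsub>Gamma\<^esub> g"
    using C unfolding H4_stabilizer_def carrier_PGamma RCOSETS_def carrier_Gamma by auto
  have "g \<in> C"
    using G.rcos_self[OF _ subgroup_unit_scalars] g carrier_Gamma by simp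
  then have "act_line g ` H4 j = H4 j"
    using C unfolding H4_stabilizer_def by auto
  then obtain \<mu> where "\<mu> \<in> Eis_units" "xi_conj j g = \<mu> \<cdot>\<^sub>m g"
    using H4_stabilizer_rep_xi_conj[OF j g(1)] by blast
  then obtain t where t: "t \<in> Eis_units"
    and sign: "xi_conj j (t \<cdot>\<^sub>m g) = t \<cdot>\<^sub>m g \<or> xi_conj j (t \<cdot>\<^sub>m g) = - (t \<cdot>\<^sub>m g)"
    using xi_conj_rescale_sign Gamma_carrier_carrier_mat[OF g(1)] by blast
  have tg: "(t \<cdot>\<^sub>m 1\<^sub>m 5) * g = t \<cdot>\<^sub>m g"
    using Gamma_carrier_carrier_mat[OF g(1)] by (simp add: smult_one_mat_mult)
  then have tg_Gamma: "t \<cdot>\<^sub>m g \<in> Gamma_carrier"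
    using Gamma_carrier_mult[OF unit_scalar_in_Gamma_carrier[OF t] g(1)] by simp
  have "t \<cdot>\<^sub>m g \<in> unit_scalars #>\<^bsub>Gamma\<^esub> g"
    unfolding r_coset_def mult_Gamma unit_scalars_def using t tg by blast
  then have "C = unit_scalars #>\<^bsub>Gamma\<^esub> (t \<cdot>\<^sub>m g)"
    using G.repr_independence[OF _ _ subgroup_unit_scalars] g carrier_Gamma by simp
  then show ?thesis
    using sign xi_conj_Gamma_ne_uminus[OF j tg_Gamma] tg_Gamma by blast
qed

lemma proj_lift_surj:
  assumes j: "j \<le> 4" and C: "C \<in> H4_stabilizer j"
  shows "\<exists>M \<in> carrier (O_Psi j). proj_lift j M = C"
proof -
  obtain g where "g \<in> Gamma_carrier" "C = unit_scalars #>\<^bsub>Gamma\<^esub> g" "xi_conj j g = g"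
    using H4_stabilizer_has_xi_fixed_rep[OF j C] by blast
  then show ?thesis
    unfolding proj_lift_def using xi_conj_fixed_Gamma_imp_lift_O_Psi[OF j] by metis
qed

theorem theorem5p1:
  fixes j :: nat
  assumes "j \<le> 4"
  shows "PGammaR j \<cong> PO_Psi j"
proof -
  have hom: "group_hom (O_Psi j) (PGammaR j) (proj_lift j)"
    unfolding group_hom_def group_hom_axioms_def
    using group_O_Psi group_PGammaR proj_lift_hom[OF assms] by auto
  have "proj_lift j ` carrier (O_Psi j) = carrier (PGammaR j)"
    using proj_lift_in_H4_stabilizer[OF assms] proj_lift_surj[OF assms]
    unfolding carrier_PGammaR by blast
  then have "O_Psi j Mod kernel (O_Psi j) (PGammaR j) (proj_lift j) \<cong> PGammaR j"
    by (rule group_hom.FactGroup_iso[OF hom])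
  then have "PGammaR j \<cong> O_Psi j Mod kernel (O_Psi j) (PGammaR j) (proj_lift j)"
    by (rule group.iso_sym[OF normal.factorgroup_is_group[OF group_hom.normal_kernel[OF hom]]])
  then show ?thesis
    unfolding PO_Psi_def proj_lift_kernel[OF assms] .
qed

end
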